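(* Let $L$ and ${}^*L=e^{\sigma(x)}L+\beta$ be as in the context and $\tau=e^{\sigma}\,{}^*L/L$. Then the $v$-scalar curvatures satisfy $${}^*S=\tau^{-1}\Big[S-\frac{n-2}{{}^*L}A_\beta\Big].$$
   Context: $M$ is a smooth manifold of dimension $n$ with local coordinates $(x^i)$ and induced fiber coordinates $(y^i)$ on $TM$. $L(x,y)$ is a Finsler metric: positive and smooth for $y\neq0$, positively homogeneous of degree 1 in $y$, with positive definite fundamental tensor $g_{ij}=\frac12\frac{\partial^2L^2}{\partial y^i\partial y^j}$ and inverse $g^{ij}$. $\sigma(x)$ is a smooth function on $M$ and $\beta(x,y)=b_i(x)y^i$ is a 1-form; the conformal $\beta$-change is ${}^*L=e^{\sigma(x)}L+\beta$, assumed to be again a Finsler metric. Notation: $l_i=\partial L/\partial y^i$, $l^i=g^{ij}l_j$, $h_{ij}=g_{ij}-l_il_j$, $c_{ijk}=\frac12\partial g_{ij}/\partial y^k$, $c_i{}^r{}_j=g^{rk}c_{ijk}$, $c_i=g^{jk}c_{ijk}$, $b^i=g^{ij}b_j$, $m_i=b_i-\frac{\beta}{L}l_i$, $m^i=g^{ij}m_j$, $m^2=m_im^i$, $c_\beta=c_ib^i$, $A_\beta=c_\beta+\frac{n+1}{4\,{}^*L}m^2$, $S_{hijk}=c_{ijr}c_h{}^r{}_k-c_{ikr}c_h{}^r{}_j$, $S_{ik}=g^{hj}S_{hijk}$, $S=g^{ik}S_{ik}$. Quantities built from ${}^*L$ by the same formulas (using ${}^*g_{ij}$ and its inverse ${}^*g^{ij}$)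 are denoted with a left asterisk. *)

theory Defs
  imports "HOL-Analysis.Analysis"
begin

text \<open>Everything is formulated in a local chart: points x of an open set U of R^n,
fibre coordinates y in R^n (type real^'n, n = CARD('n)). A Finsler function is
F :: real^'n \<Rightarrow> real^'n \<Rightarrow> real, F x y = L(x,y).
All v-quantities only involve y-derivatives at fixed x.\<close>

definition pd :: "'n::finite \<Rightarrow> (real^'n \<Rightarrow> real) \<Rightarrow> real^'n \<Rightarrow> real" where
  "pd i f y = deriv (\<lambda>t. f (y + t *\<^sub>R axis i 1)) 0"

fun iter_pd :: "'n::finite list \<Rightarrow> (real^'n \<Rightarrow> real) \<Rightarrow> real^'n \<Rightarrow> real" where
  "iter_pd [] f = f"
| "iter_pd (i # is) f = pd i (iter_pd is f)"

definition smooth_on :: "(real^'n::finite) set \<Rightarrow> (real^'n \<Rightarrow> real) \<Rightarrow> bool" where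
  "smooth_on S f \<longleftrightarrow> (\<forall>is. \<forall>y\<in>S. iter_pd is f differentiable (at y))"

definition fund :: "(real^'n::finite \<Rightarrow> real) \<Rightarrow> real^'n \<Rightarrow> real^'n^'n" where
  "fund F y = (\<chi> i j. (1/2) * pd i (pd j (\<lambda>z. (F z)\<^sup>2)) y)"

definition fund_inv :: "(real^'n::finite \<Rightarrow> real) \<Rightarrow> real^'n \<Rightarrow> real^'n^'n" where
  "fund_inv F y = matrix_inv (fund F y)"

definition Finsler_fun :: "(real^'n::finite \<Rightarrow> real) \<Rightarrow> bool" where
  "Finsler_fun F \<longleftrightarrow>
     (\<forall>y. y \<noteq> 0 \<longrightarrow> F y > 0) \<and>
     smooth_on (UNIV - {0}) F \<and>
     (\<forall>y (t::real). t > 0 \<longrightarrow> F (t *\<^sub>R y) = t * F y) \<and>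
     (\<forall>y. y \<noteq> 0 \<longrightarrow> (\<forall>v. v \<noteq> 0 \<longrightarrow> v \<bullet> (fund F y *v v) > 0))"

definition cartan :: "(real^'n::finite \<Rightarrow> real) \<Rightarrow> 'n \<Rightarrow> 'n \<Rightarrow> 'n \<Rightarrow> real^'n \<Rightarrow> real" where
  "cartan F i j k y = (1/2) * pd k (\<lambda>z. fund F z $ i $ j) y"

definition cartan_mixed :: "(real^'n::finite \<Rightarrow> real) \<Rightarrow> 'n \<Rightarrow> 'n \<Rightarrow> 'n \<Rightarrow> real^'n \<Rightarrow> real" where
  "cartan_mixed F i r j y = (\<Sum>k\<in>UNIV. fund_inv F y $ r $ k * cartan F i j k y)"

definition cartan_vec :: "(real^'n::finite \<Rightarrow> real) \<Rightarrow> 'n \<Rightarrow> real^'n \<Rightarrow> real" where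
  "cartan_vec F i y = (\<Sum>j\<in>UNIV. \<Sum>k\<in>UNIV. fund_inv F y $ j $ k * cartan F i j k y)"

definition vcurv :: "(real^'n::finite \<Rightarrow> real) \<Rightarrow> 'n \<Rightarrow> 'n \<Rightarrow> 'n \<Rightarrow> 'n \<Rightarrow> real^'n \<Rightarrow> real" where
  "vcurv F h i j k y = (\<Sum>r\<in>UNIV. cartan F i j r y * cartan_mixed F h r k y
                                  - cartan F i k r y * cartan_mixed F h r j y)"

definition vricci :: "(real^'n::finite \<Rightarrow> real) \<Rightarrow> 'n \<Rightarrow> 'n \<Rightarrow> real^'n \<Rightarrow> real" where
  "vricci F i k y = (\<Sum>h\<in>UNIV. \<Sum>j\<in>UNIV. fund_inv F y $ h $ j * vcurv F h i j k y)"

definition vscalar :: "(real^'n::finite \<Rightarrow> real) \<Rightarrow> real^'n \<Rightarrow> real" where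
  "vscalar F y = (\<Sum>i\<in>UNIV. \<Sum>k\<in>UNIV. fund_inv F y $ i $ k * vricci F i k y)"

definition lvec :: "(real^'n::finite \<Rightarrow> real) \<Rightarrow> real^'n \<Rightarrow> real^'n" where
  "lvec F y = (\<chi> i. pd i F y)"

definition mvec :: "(real^'n::finite \<Rightarrow> real) \<Rightarrow> real^'n \<Rightarrow> real^'n \<Rightarrow> real^'n" where
  "mvec F b y = b - ((b \<bullet> y) / F y) *\<^sub>R lvec F y"

definition msq :: "(real^'n::finite \<Rightarrow> real) \<Rightarrow> real^'n \<Rightarrow> real^'n \<Rightarrow> real" where
  "msq F b y = mvec F b y \<bullet> (fund_inv F y *v mvec F b y)"

definition c_beta :: "(real^'n::finite \<Rightarrow> real) \<Rightarrow> real^'n \<Rightarrow> real^'n \<Rightarrow> real" where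
  "c_beta F b y = (\<Sum>i\<in>UNIV. cartan_vec F i y * (fund_inv F y *v b) $ i)"

definition A_beta :: "(real^'n::finite \<Rightarrow> real) \<Rightarrow> (real^'n \<Rightarrow> real) \<Rightarrow> real^'n \<Rightarrow> real^'n \<Rightarrow> real" where
  "A_beta F Fs b y = c_beta F b y + (real CARD('n) + 1) / (4 * Fs y) * msq F b y"

end

(* At a fixed point x and a direction y, everything reduces to algebra in the jet of L at y.
   With l, H, T the first three y-derivatives of L one has g = L H + l l^T and
   2 c_ijk = l_k H_ij + L T_kij + H_ki l_j + l_i H_kj, and the jet of *L = e^sigma L + beta is
   (e^sigma L + beta, e^sigma l + b, e^sigma H, e^sigma T). Hence
   *c_ijk = tau c_ijk + (e^sigma / 2) (H_ij m_k + H_jk m_i + H_ik m_j).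
   All tensors involved are indicatory (annihilated by y), and on indicatory tensors *g^-1 acts
   as g^-1 / tau, so *S is tau^-3 times the quadratic form defining S, evaluated at *c.
   Expanding it, every contraction with the correction term collapses, because g^-1 H g^-1 acts
   as g^-1 / L on indicatory tensors, to (2 - n) / L times a trace against m; collecting the
   terms gives the formula. *)

theory Submission
  imports Defs
begin

section \<open>Partial derivatives\<close>

lemma has_real_derivative_along_line:
  fixes f :: "real^'n::finite \<Rightarrow> real"
  assumes "(f has_derivative D) (at (w + s *\<^sub>R v))"
  shows "((\<lambda>t. f (w + t *\<^sub>R v)) has_real_derivative D v) (at s)"
proof -
  have "((\<lambda>t::real. w + t *\<^sub>R v) has_derivative (\<lambda>t. t *\<^sub>R v)) (at s)"
    by (auto intro!: derivative_eq_intros)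
  from has_derivative_compose[OF this assms]
  have "((\<lambda>t. f (w + t *\<^sub>R v)) has_derivative (\<lambda>t. D (t *\<^sub>R v))) (at s)" .
  moreover have "D (t *\<^sub>R v) = t * D v" for t
    using has_derivative_linear[OF assms] by (simp add: linear_cmul)
  ultimately show ?thesis
    by (auto intro: has_derivative_imp_has_field_derivative)
qed

lemma pd_eq_has_derivative:
  fixes f :: "real^'n::finite \<Rightarrow> real"
  assumes "(f has_derivative D) (at z)"
  shows "pd i f z = D (axis i 1)"
  unfolding pd_def
  by (rule DERIV_imp_deriv) (use has_real_derivative_along_line[of f D z 0] assms in simp)

lemma has_real_derivative_pd:
  fixes f :: "real^'n::finite \<Rightarrow> real"
  assumes "f differentiable (at (w + s *\<^sub>R axis i 1))"
  shows "((\<lambda>t. f (w + t *\<^sub>R axis i 1)) has_real_derivative pd i f (w + s *\<^sub>R axis i 1)) (at s)"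
proof -
  obtain D where D: "(f has_derivative D) (at (w + s *\<^sub>R axis i 1))"
    using assms by (auto simp: differentiable_def)
  show ?thesis
    using has_real_derivative_along_line[OF D] unfolding pd_eq_has_derivative[OF D] .
qed

lemma eventually_line_in_open:
  fixes w :: "real^'n::finite"
  assumes "open S" "w \<in> S"
  shows "eventually (\<lambda>s::real. w + s *\<^sub>R v \<in> S) (nhds 0)"
proof -
  have "open {s::real. w + s *\<^sub>R v \<in> S}"
    by (intro open_vimage[where f="\<lambda>s. w + s *\<^sub>R v", unfolded vimage_def]
        continuous_intros assms(1))
  from eventually_nhds_in_open[OF this] show ?thesis
    using assms(2) by simp
qed

lemma pd_cong_open:
  fixes f g :: "real^'n::finite \<Rightarrow> real"
  assumes "open S" "z \<in> S" "\<And>w. w \<in> S \<Longrightarrow> f w = g w"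
  shows "pd i f z = pd i g z"
  unfolding pd_def
  by (rule deriv_cong_ev[OF _ refl])
     (use eventually_line_in_open[OF assms(1,2), of "axis i 1"] in
      \<open>auto elim!: eventually_mono simp: assms(3)\<close>)

lemma pd_add:
  fixes f g :: "real^'n::finite \<Rightarrow> real"
  assumes "f differentiable (at z)" "g differentiable (at z)"
  shows "pd i (\<lambda>w. f w + g w) z = pd i f z + pd i g z"
proof -
  obtain Df Dg where f: "(f has_derivative Df) (at z)" and g: "(g has_derivative Dg) (at z)"
    using assms by (auto simp: differentiable_def)
  show ?thesis
    using pd_eq_has_derivative[OF has_derivative_add[OF f g]]
      pd_eq_has_derivative[OF f] pd_eq_has_derivative[OF g] by simp
qed

lemma pd_mult:
  fixes f g :: "real^'n::finite \<Rightarrow> real"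
  assumes "f differentiable (at z)" "g differentiable (at z)"
  shows "pd i (\<lambda>w. f w * g w) z = pd i f z * g z + f z * pd i g z"
proof -
  obtain Df Dg where f: "(f has_derivative Df) (at z)" and g: "(g has_derivative Dg) (at z)"
    using assms by (auto simp: differentiable_def)
  show ?thesis
    using pd_eq_has_derivative[OF has_derivative_mult[OF f g]]
      pd_eq_has_derivative[OF f] pd_eq_has_derivative[OF g] by (simp add: algebra_simps)
qed

lemma pd_cmult:
  fixes f :: "real^'n::finite \<Rightarrow> real"
  assumes "f differentiable (at z)"
  shows "pd i (\<lambda>w. c * f w) z = c * pd i f z"
  using pd_mult[of "\<lambda>_. c" z f i] assms by (simp add: pd_def)

lemma pd_const [simp]: "pd i (\<lambda>w. c) z = 0"
  unfolding pd_def by simp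

lemma pd_inner [simp]: "pd i (\<lambda>w. b \<bullet> w) z = b $ i"
proof -
  have "((\<lambda>w. b \<bullet> w) has_derivative (\<lambda>w. b \<bullet> w)) (at z)"
    by (auto intro!: derivative_eq_intros)
  from pd_eq_has_derivative[OF this] show ?thesis by (simp add: inner_axis)
qed

text \<open>The origin is excluded because partial derivatives of a homogeneous function are junk there;
  this is what lets the property pass to partial derivatives (\<open>pos_homogeneous_pd\<close>).\<close>

definition pos_homogeneous :: "real \<Rightarrow> (real^'n::finite \<Rightarrow> real) \<Rightarrow> bool" where
  "pos_homogeneous k G \<longleftrightarrow> (\<forall>w t. w \<noteq> 0 \<longrightarrow> t > 0 \<longrightarrow> G (t *\<^sub>R w) = t powr k * G w)"

lemma pos_homogeneous_pd:
  fixes G :: "real^'n::finite \<Rightarrow> real"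
  assumes hom: "pos_homogeneous k G" and diff: "\<And>w. w \<noteq> 0 \<Longrightarrow> G differentiable (at w)"
  shows "pos_homogeneous (k - 1) (pd i G)"
  unfolding pos_homogeneous_def
proof (intro allI impI)
  fix z :: "real^'n" and t :: real
  assume z: "z \<noteq> 0" and t: "t > 0"
  obtain D where D: "(G has_derivative D) (at z)"
    using diff[OF z] by (auto simp: differentiable_def)
  define v where "v = (1/t) *\<^sub>R axis i (1::real)"
  have "eventually (\<lambda>s::real. z + s *\<^sub>R v \<in> - {0}) (nhds 0)"
    by (rule eventually_line_in_open) (use z in auto)
  then have ev: "eventually (\<lambda>s. G (t *\<^sub>R z + s *\<^sub>R axis i 1) = t powr k * G (z + s *\<^sub>R v)) (nhds 0)"
  proof (rule eventually_mono)
    fix s assume "z + s *\<^sub>R v \<in> - {0}"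
    moreover have "t *\<^sub>R z + s *\<^sub>R axis i 1 = t *\<^sub>R (z + s *\<^sub>R v)"
      using t by (simp add: v_def scaleR_add_right)
    ultimately show "G (t *\<^sub>R z + s *\<^sub>R axis i 1) = t powr k * G (z + s *\<^sub>R v)"
      using hom t unfolding pos_homogeneous_def by simp
  qed
  have "D v = (1/t) * D (axis i 1)"
    using has_derivative_linear[OF D] by (simp add: v_def linear_cmul)
  then have "t powr k * D v = t powr (k - 1) * D (axis i 1)"
    using t by (simp add: powr_diff)
  moreover have "(G has_derivative D) (at (z + 0 *\<^sub>R v))"
    using D by simp
  from DERIV_cmult[OF has_real_derivative_along_line[OF this], of "t powr k"] calculation
  have "((\<lambda>s. t powr k * G (z + s *\<^sub>R v)) has_real_derivative t powr (k - 1) * D (axis i 1)) (at 0)"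
    by simp
  then have "((\<lambda>s. G (t *\<^sub>R z + s *\<^sub>R axis i 1)) has_real_derivative t powr (k - 1) * D (axis i 1)) (at 0)"
    using DERIV_cong_ev[OF refl ev refl] by simp
  then show "pd i G (t *\<^sub>R z) = t powr (k - 1) * pd i G z"
    unfolding pd_def[of i G "t *\<^sub>R z"] pd_eq_has_derivative[OF D] by (rule DERIV_imp_deriv)
qed

lemma euler_homogeneous:
  fixes G :: "real^'n::finite \<Rightarrow> real"
  assumes hom: "pos_homogeneous k G" and "G differentiable (at z)" and z: "z \<noteq> 0"
  shows "(\<Sum>i\<in>UNIV. z $ i * pd i G z) = k * G z"
proof -
  obtain D where D: "(G has_derivative D) (at z)"
    using assms by (auto simp: differentiable_def)
  have "eventually (\<lambda>s::real. s \<in> {-1<..}) (nhds 0)"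
    by (rule eventually_nhds_in_open) auto
  then have ev: "eventually (\<lambda>s. G (z + s *\<^sub>R z) = (1 + s) powr k * G z) (nhds 0)"
  proof (rule eventually_mono)
    fix s :: real assume "s \<in> {-1<..}"
    then have "G ((1 + s) *\<^sub>R z) = (1 + s) powr k * G z"
      using hom z unfolding pos_homogeneous_def by simp
    then show "G (z + s *\<^sub>R z) = (1 + s) powr k * G z"
      by (simp add: algebra_simps)
  qed
  have "((\<lambda>s. (1 + s) powr k * G z) has_real_derivative k * G z) (at 0)"
    by (auto intro!: derivative_eq_intros)
  moreover have "(G has_derivative D) (at (z + 0 *\<^sub>R z))"
    using D by simp
  from has_real_derivative_along_line[OF this]
  have "((\<lambda>s. (1 + s) powr k * G z) has_real_derivative D z) (at 0)"
    using DERIV_cong_ev[OF refl ev refl] by simp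
  ultimately have "D z = k * G z"
    by (rule DERIV_unique[symmetric])
  moreover have "D z = (\<Sum>i\<in>UNIV. z $ i * D (axis i 1))"
  proof -
    have "D z = D (\<Sum>i\<in>UNIV. z $ i *\<^sub>R axis i 1)"
      using basis_expansion[of z] by (simp add: scalar_mult_eq_scaleR)
    then show ?thesis
      using has_derivative_linear[OF D] by (simp add: linear_sum linear_cmul)
  qed
  ultimately show ?thesis
    using pd_eq_has_derivative[OF D] by simp
qed

section \<open>Symmetry of second partial derivatives\<close>

lemma mixed_difference_mvt:
  fixes f :: "real^'n::finite \<Rightarrow> real"
  assumes h: "h > 0"
    and S: "\<And>a b. 0 \<le> a \<Longrightarrow> a \<le> h \<Longrightarrow> 0 \<le> b \<Longrightarrow> b \<le> h \<Longrightarrow> z + a *\<^sub>R axis i 1 + b *\<^sub>R axis j 1 \<in> S"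
    and df: "\<And>w. w \<in> S \<Longrightarrow> f differentiable (at w)"
    and dfi: "\<And>w. w \<in> S \<Longrightarrow> pd i f differentiable (at w)"
  obtains a b where "0 < a" "a < h" "0 < b" "b < h"
    "f (z + h *\<^sub>R axis i 1 + h *\<^sub>R axis j 1) - f (z + h *\<^sub>R axis i 1) - f (z + h *\<^sub>R axis j 1) + f z
       = h * h * pd j (pd i f) (z + a *\<^sub>R axis i 1 + b *\<^sub>R axis j 1)"
proof -
  define e where "e = axis i (1::real)"
  define d where "d = axis j (1::real)"
  define \<phi> where "\<phi> s = f (z + h *\<^sub>R d + s *\<^sub>R e) - f (z + s *\<^sub>R e)" for s
  have "(\<phi> has_real_derivative pd i f (z + h *\<^sub>R d + s *\<^sub>R e) - pd i f (z + s *\<^sub>R e)) (at s)"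
    if "0 \<le> s" "s \<le> h" for s
    unfolding \<phi>_def e_def
    by (intro DERIV_diff has_real_derivative_pd df)
       (use S[of s h] S[of s 0] that h in \<open>auto simp: d_def algebra_simps\<close>)
  from MVT2[OF h this] obtain a where a: "0 < a" "a < h"
    and \<phi>: "\<phi> h - \<phi> 0 = h * (pd i f (z + h *\<^sub>R d + a *\<^sub>R e) - pd i f (z + a *\<^sub>R e))"
    by auto
  define \<psi> where "\<psi> s = pd i f (z + a *\<^sub>R e + s *\<^sub>R d)" for s
  have "(\<psi> has_real_derivative pd j (pd i f) (z + a *\<^sub>R e + s *\<^sub>R d)) (at s)"
    if "0 \<le> s" "s \<le> h" for s
    unfolding \<psi>_def d_def
    by (intro has_real_derivative_pd dfi) (use S[of a s] that a in \<open>auto simp: e_def\<close>)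
  from MVT2[OF h this] obtain b where b: "0 < b" "b < h"
    and \<psi>: "\<psi> h - \<psi> 0 = h * pd j (pd i f) (z + a *\<^sub>R e + b *\<^sub>R d)"
    by auto
  have "\<phi> h - \<phi> 0 = h * (\<psi> h - \<psi> 0)"
    unfolding \<phi> \<psi>_def by (simp add: algebra_simps)
  with \<psi> show ?thesis
    using a b by (intro that[of a b]) (auto simp: \<phi>_def e_def d_def algebra_simps)
qed

lemma mixed_partials_meet_nearby:
  fixes f :: "real^'n::finite \<Rightarrow> real"
  assumes S: "open S" "z \<in> S"
    and df: "\<And>w. w \<in> S \<Longrightarrow> f differentiable (at w)"
    and dfi: "\<And>w. w \<in> S \<Longrightarrow> pd i f differentiable (at w)"
    and dfj: "\<And>w. w \<in> S \<Longrightarrow> pd j f differentiable (at w)"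
    and "\<delta> > 0"
  obtains w w' where "dist w z < \<delta>" "dist w' z < \<delta>" "pd j (pd i f) w = pd i (pd j f) w'"
proof -
  obtain r where r: "r > 0" "ball z r \<subseteq> S"
    using S openE by blast
  define h where "h = min r \<delta> / 3"
  have h: "h > 0"
    using r \<open>\<delta> > 0\<close> by (simp add: h_def)
  have near: "dist (z + a *\<^sub>R axis k 1 + b *\<^sub>R axis m 1) z < min r \<delta>"
    if "0 \<le> a" "a \<le> h" "0 \<le> b" "b \<le> h" for a b and k m :: 'n
  proof -
    have "dist (z + a *\<^sub>R axis k 1 + b *\<^sub>R axis m 1) z \<le> \<bar>a\<bar> + \<bar>b\<bar>"
      using norm_triangle_ineq[of "a *\<^sub>R axis k (1::real)" "b *\<^sub>R axis m 1"]
      by (simp add: dist_norm add.assoc)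
    then show ?thesis
      using that h by (simp add: h_def)
  qed
  have inS: "z + a *\<^sub>R axis k 1 + b *\<^sub>R axis m 1 \<in> S"
    if "0 \<le> a" "a \<le> h" "0 \<le> b" "b \<le> h" for a b and k m :: 'n
    using near[OF that, of k m] r by (auto simp: dist_commute)
  obtain a b where ab: "0 < a" "a < h" "0 < b" "b < h"
    and \<Delta>ij: "f (z + h *\<^sub>R axis i 1 + h *\<^sub>R axis j 1) - f (z + h *\<^sub>R axis i 1) - f (z + h *\<^sub>R axis j 1) + f z
      = h * h * pd j (pd i f) (z + a *\<^sub>R axis i 1 + b *\<^sub>R axis j 1)"
    using mixed_difference_mvt[OF h inS df dfi] by blast
  obtain a' b' where ab': "0 < a'" "a' < h" "0 < b'" "b' < h"
    and \<Delta>ji: "f (z + h *\<^sub>R axis j 1 + h *\<^sub>R axis i 1) - f (z + h *\<^sub>R axis j 1) - f (z + h *\<^sub>R axis i 1) + f z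
      = h * h * pd i (pd j f) (z + a' *\<^sub>R axis j 1 + b' *\<^sub>R axis i 1)"
    using mixed_difference_mvt[OF h inS df dfj] by blast
  show ?thesis
  proof (rule that)
    show "dist (z + a *\<^sub>R axis i 1 + b *\<^sub>R axis j 1) z < \<delta>"
      using near[of a b i j] ab by simp
    show "dist (z + a' *\<^sub>R axis j 1 + b' *\<^sub>R axis i 1) z < \<delta>"
      using near[of a' b' j i] ab' by simp
    show "pd j (pd i f) (z + a *\<^sub>R axis i 1 + b *\<^sub>R axis j 1)
        = pd i (pd j f) (z + a' *\<^sub>R axis j 1 + b' *\<^sub>R axis i 1)"
      using \<Delta>ij \<Delta>ji h by (simp add: algebra_simps)
  qed
qed

lemma pd_commute:
  fixes f :: "real^'n::finite \<Rightarrow> real"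
  assumes S: "open S" "z \<in> S"
    and df: "\<And>w. w \<in> S \<Longrightarrow> f differentiable (at w)"
    and dfi: "\<And>w. w \<in> S \<Longrightarrow> pd i f differentiable (at w)"
    and dfj: "\<And>w. w \<in> S \<Longrightarrow> pd j f differentiable (at w)"
    and cA: "continuous (at z) (pd j (pd i f))"
    and cB: "continuous (at z) (pd i (pd j f))"
  shows "pd j (pd i f) z = pd i (pd j f) z"
proof -
  have approx: "\<bar>pd j (pd i f) z - pd i (pd j f) z\<bar> \<le> 2 * \<epsilon>" if "\<epsilon> > 0" for \<epsilon>
  proof -
    obtain dA where dA: "dA > 0" "\<And>w. dist w z < dA \<Longrightarrow> dist (pd j (pd i f) w) (pd j (pd i f) z) < \<epsilon>"
      using cA \<open>\<epsilon> > 0\<close> unfolding continuous_at_eps_delta by blast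
    obtain dB where dB: "dB > 0" "\<And>w. dist w z < dB \<Longrightarrow> dist (pd i (pd j f) w) (pd i (pd j f) z) < \<epsilon>"
      using cB \<open>\<epsilon> > 0\<close> unfolding continuous_at_eps_delta by blast
    obtain w w' where "dist w z < min dA dB" "dist w' z < min dA dB"
      and "pd j (pd i f) w = pd i (pd j f) w'"
      using mixed_partials_meet_nearby[OF S df dfi dfj, of "min dA dB"] dA dB by auto
    with dA(2)[of w] dB(2)[of w'] show ?thesis
      unfolding dist_real_def by linarith
  qed
  then have "\<bar>pd j (pd i f) z - pd i (pd j f) z\<bar> \<le> 0 + \<epsilon>" if "\<epsilon> > 0" for \<epsilon>
    using approx[of "\<epsilon> / 2"] that by simp
  then have "\<bar>pd j (pd i f) z - pd i (pd j f) z\<bar> \<le> 0"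
    by (rule field_le_epsilon)
  then show ?thesis
    by simp
qed

section \<open>Smooth functions and Finsler functions\<close>

lemma iter_pd_snoc: "iter_pd (is @ [j]) f = iter_pd is (pd j f)"
  by (induction "is") auto

lemma smooth_on_pd: "smooth_on S f \<Longrightarrow> smooth_on S (pd j f)"
  unfolding smooth_on_def by (metis iter_pd_snoc)

lemma smooth_on_differentiable: "smooth_on S f \<Longrightarrow> w \<in> S \<Longrightarrow> f differentiable (at w)"
  unfolding smooth_on_def by (metis iter_pd.simps(1))

lemma smooth_on_pd_commute:
  assumes "smooth_on S f" "open S" "z \<in> S"
  shows "pd i (pd j f) z = pd j (pd i f) z"
  using smooth_on_differentiable[OF smooth_on_pd[OF smooth_on_pd[OF assms(1)]]] assms
  by (intro pd_commute[OF assms(2,3)])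
     (auto intro: differentiable_imp_continuous_within smooth_on_differentiable smooth_on_pd)

lemma open_nonzero: "open (UNIV - {0 :: real^'n::finite})"
  by (simp add: open_delete)

definition hessian :: "(real^'n::finite \<Rightarrow> real) \<Rightarrow> real^'n \<Rightarrow> 'n \<Rightarrow> 'n \<Rightarrow> real" where
  "hessian G z i j = pd i (pd j G) z"

definition third_derivative ::
    "(real^'n::finite \<Rightarrow> real) \<Rightarrow> real^'n \<Rightarrow> 'n \<Rightarrow> 'n \<Rightarrow> 'n \<Rightarrow> real" where
  "third_derivative G z k i j = pd k (pd i (pd j G)) z"

text \<open>The fundamental and Cartan tensors at \<open>y\<close>, written through the jet
  \<open>(G y, \<partial>\<^sub>i G, \<partial>\<^sub>i \<partial>\<^sub>j G, \<partial>\<^sub>k \<partial>\<^sub>i \<partial>\<^sub>j G)\<close> of \<open>G\<close> at \<open>y\<close>.\<close>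

definition fund_of :: "real \<Rightarrow> real^'n::finite \<Rightarrow> ('n \<Rightarrow> 'n \<Rightarrow> real) \<Rightarrow> real^'n^'n" where
  "fund_of G0 l H = (\<chi> i j. G0 * H i j + l $ i * l $ j)"

lemma fund_of_nth [simp]: "fund_of G0 l H $ i $ j = G0 * H i j + l $ i * l $ j"
  by (simp add: fund_of_def)

definition cartan_of :: "real \<Rightarrow> real^'n::finite \<Rightarrow> ('n \<Rightarrow> 'n \<Rightarrow> real)
    \<Rightarrow> ('n \<Rightarrow> 'n \<Rightarrow> 'n \<Rightarrow> real) \<Rightarrow> 'n \<Rightarrow> 'n \<Rightarrow> 'n \<Rightarrow> real" where
  "cartan_of G0 l H T i j k = (l $ k * H i j + G0 * T k i j + H k i * l $ j + l $ i * H k j) / 2"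

lemma fund_eq_fund_of:
  fixes G :: "real^'n::finite \<Rightarrow> real"
  assumes G: "smooth_on (UNIV - {0}) G" and z: "z \<noteq> 0"
  shows "fund G z = fund_of (G z) (lvec G z) (hessian G z)"
proof -
  have G': "smooth_on (UNIV - {0}) (pd j G)" for j
    using smooth_on_pd[OF G] .
  have "pd j (\<lambda>w. (G w)\<^sup>2) w = 2 * (G w * pd j G w)" if "w \<in> UNIV - {0}" for w j
    using pd_mult[of G w G j] smooth_on_differentiable[OF G that] by (simp add: power2_eq_square)
  then have "pd i (pd j (\<lambda>w. (G w)\<^sup>2)) z = pd i (\<lambda>w. 2 * (G w * pd j G w)) z" for i j
    using z by (intro pd_cong_open[OF open_nonzero]) auto
  also have "\<dots> i j = 2 * (pd i G z * pd j G z + G z * pd i (pd j G) z)" for i j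
    using z smooth_on_differentiable[OF G] smooth_on_differentiable[OF G']
    by (simp add: pd_cmult pd_mult differentiable_mult)
  finally show ?thesis
    by (simp add: fund_def fund_of_def hessian_def lvec_def vec_eq_iff algebra_simps)
qed

lemma cartan_eq_cartan_of:
  fixes G :: "real^'n::finite \<Rightarrow> real"
  assumes G: "smooth_on (UNIV - {0}) G" and z: "z \<noteq> 0"
  shows "cartan G i j k z
    = cartan_of (G z) (lvec G z) (hessian G z) (third_derivative G z) i j k"
proof -
  have G': "smooth_on (UNIV - {0}) (pd j G)" "smooth_on (UNIV - {0}) (pd i (pd j G))" for i j
    using smooth_on_pd[OF G] smooth_on_pd[OF smooth_on_pd[OF G]] by auto
  have "pd k (\<lambda>w. fund G w $ i $ j) z
      = pd k (\<lambda>w. G w * pd i (pd j G) w + pd i G w * pd j G w) z"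
    using z by (intro pd_cong_open[OF open_nonzero])
      (auto simp: fund_eq_fund_of[OF G] fund_of_def hessian_def lvec_def)
  also have "\<dots> = pd k G z * pd i (pd j G) z + G z * pd k (pd i (pd j G)) z
      + (pd k (pd i G) z * pd j G z + pd i G z * pd k (pd j G) z)"
    using z smooth_on_differentiable[OF G] smooth_on_differentiable[OF G'(1)]
      smooth_on_differentiable[OF G'(2)]
    by (simp add: pd_add pd_mult differentiable_mult)
  finally show ?thesis
    by (simp add: cartan_def cartan_of_def hessian_def third_derivative_def lvec_def)
qed

lemma Finsler_fun_pos: "Finsler_fun F \<Longrightarrow> z \<noteq> 0 \<Longrightarrow> F z > 0"
  unfolding Finsler_fun_def by blast

lemma Finsler_fun_smooth: "Finsler_fun F \<Longrightarrow> smooth_on (UNIV - {0}) F"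
  unfolding Finsler_fun_def by blast

lemma Finsler_fun_pos_homogeneous: "Finsler_fun F \<Longrightarrow> pos_homogeneous 1 F"
  unfolding Finsler_fun_def pos_homogeneous_def by simp

lemma Finsler_fun_pos_def:
  "Finsler_fun F \<Longrightarrow> z \<noteq> 0 \<Longrightarrow> v \<noteq> 0 \<Longrightarrow> v \<bullet> (fund F z *v v) > 0"
  unfolding Finsler_fun_def by blast

lemma
  assumes F: "Finsler_fun F" and z: "z \<noteq> 0"
  shows Finsler_lvec_inner: "lvec F z \<bullet> z = F z"
    and Finsler_hessian_annihilates: "(\<Sum>j\<in>UNIV. hessian F z i j * z $ j) = 0"
    and Finsler_third_derivative_annihilates:
      "(\<Sum>k\<in>UNIV. z $ k * third_derivative F z k i j) = - hessian F z i j"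
proof -
  note sm = Finsler_fun_smooth[OF F]
  have "iter_pd is F differentiable (at w)" if "w \<noteq> 0" for "is" w
    using sm that unfolding smooth_on_def by blast
  from this[of _ "[]"] this[of _ "[i]" for i] this[of _ "[i, j]" for i j]
  have diff0: "F differentiable (at w)" and diff1: "pd i F differentiable (at w)"
    and diff2: "pd i (pd j F) differentiable (at w)" if "w \<noteq> 0" for w i j
    using that by simp_all
  have hom1: "pos_homogeneous 1 F"
    using Finsler_fun_pos_homogeneous[OF F] .
  have hom0: "pos_homogeneous 0 (pd i F)" for i
    using pos_homogeneous_pd[OF hom1, of i] diff0 by simp
  have hom_1: "pos_homogeneous (-1) (pd i (pd j F))" for i j
    using pos_homogeneous_pd[OF hom0[of j], of i] diff1 by simp
  show "lvec F z \<bullet> z = F z"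
    using euler_homogeneous[OF hom1 diff0[OF z] z]
    by (simp add: inner_vec_def lvec_def mult.commute)
  have "(\<Sum>j\<in>UNIV. z $ j * pd j (pd i F) z) = 0"
    using euler_homogeneous[OF hom0 diff1[OF z] z] by simp
  then show "(\<Sum>j\<in>UNIV. hessian F z i j * z $ j) = 0"
    using smooth_on_pd_commute[OF sm open_nonzero] z
    by (simp add: hessian_def mult.commute)
  show "(\<Sum>k\<in>UNIV. z $ k * third_derivative F z k i j) = - hessian F z i j"
    using euler_homogeneous[OF hom_1 diff2[OF z] z]
    by (simp add: third_derivative_def hessian_def)
qed

lemma
  assumes F: "Finsler_fun F" and z: "z \<noteq> 0"
  shows lvec_beta_change: "lvec (\<lambda>v. e * F v + b \<bullet> v) z = e *\<^sub>R lvec F z + b"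
    and hessian_beta_change: "hessian (\<lambda>v. e * F v + b \<bullet> v) z = (\<lambda>i j. e * hessian F z i j)"
    and third_derivative_beta_change:
      "third_derivative (\<lambda>v. e * F v + b \<bullet> v) z = (\<lambda>k i j. e * third_derivative F z k i j)"
proof -
  note sm = Finsler_fun_smooth[OF F]
  have "iter_pd is F differentiable (at w)" if "w \<noteq> 0" for "is" w
    using sm that unfolding smooth_on_def by blast
  from this[of _ "[]"] this[of _ "[i]" for i] this[of _ "[i, j]" for i j]
  have diff0: "F differentiable (at w)" and diff1: "pd i F differentiable (at w)"
    and diff2: "pd i (pd j F) differentiable (at w)" if "w \<noteq> 0" for w i j
    using that by simp_all
  have d1: "pd i (\<lambda>v. e * F v + b \<bullet> v) w = e * pd i F w + b $ i" if "w \<noteq> 0" for i w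
    using diff0[OF that] by (simp add: pd_add pd_cmult differentiable_mult)
  then show "lvec (\<lambda>v. e * F v + b \<bullet> v) z = e *\<^sub>R lvec F z + b"
    using z by (simp add: lvec_def vec_eq_iff)
  have d2: "pd i (pd j (\<lambda>v. e * F v + b \<bullet> v)) w = e * pd i (pd j F) w" if "w \<noteq> 0" for i j w
  proof -
    have "pd i (pd j (\<lambda>v. e * F v + b \<bullet> v)) w = pd i (\<lambda>v. e * pd j F v + b $ j) w"
      using that d1 by (intro pd_cong_open[OF open_nonzero]) auto
    then show ?thesis
      using diff1[OF that] by (simp add: pd_add pd_cmult differentiable_mult)
  qed
  then show "hessian (\<lambda>v. e * F v + b \<bullet> v) z = (\<lambda>i j. e * hessian F z i j)"
    using z by (simp add: hessian_def fun_eq_iff)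
  have "pd k (pd i (pd j (\<lambda>v. e * F v + b \<bullet> v))) z = pd k (\<lambda>v. e * pd i (pd j F) v) z" for k i j
    using z d2 by (intro pd_cong_open[OF open_nonzero]) auto
  then show "third_derivative (\<lambda>v. e * F v + b \<bullet> v) z = (\<lambda>k i j. e * third_derivative F z k i j)"
    using diff2[OF z] by (simp add: third_derivative_def fun_eq_iff pd_cmult)
qed

section \<open>Contractions of indicatory tensors\<close>

definition indicatory2 :: "real^'n::finite \<Rightarrow> ('n \<Rightarrow> 'n \<Rightarrow> real) \<Rightarrow> bool" where
  "indicatory2 y M \<longleftrightarrow>
     (\<forall>k. (\<Sum>i\<in>UNIV. y $ i * M i k) = 0) \<and> (\<forall>i. (\<Sum>k\<in>UNIV. y $ k * M i k) = 0)"

definition indicatory3 :: "real^'n::finite \<Rightarrow> ('n \<Rightarrow> 'n \<Rightarrow> 'n \<Rightarrow> real) \<Rightarrow> bool" where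
  "indicatory3 y X \<longleftrightarrow> (\<forall>j k. (\<Sum>i\<in>UNIV. y $ i * X i j k) = 0)
     \<and> (\<forall>i k. (\<Sum>j\<in>UNIV. y $ j * X i j k) = 0) \<and> (\<forall>i j. (\<Sum>k\<in>UNIV. y $ k * X i j k) = 0)"

definition totally_symmetric :: "('n \<Rightarrow> 'n \<Rightarrow> 'n \<Rightarrow> real) \<Rightarrow> bool" where
  "totally_symmetric X \<longleftrightarrow> (\<forall>i j k. X i j k = X j i k \<and> X i j k = X i k j)"

text \<open>With \<open>P1 = P2 = P3 = g\<^sup>-\<^sup>1\<close> and \<open>X = Z = c\<close> this is \<open>S\<close>
  (\<open>vscalar_eq_vscalar_form\<close>); the three inverse metrics are kept apart so that \<open>g\<^sup>-\<^sup>1\<close>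
  can be replaced by \<open>*g\<^sup>-\<^sup>1\<close> one slot at a time.\<close>

definition vscalar_form :: "('n::finite \<Rightarrow> 'n \<Rightarrow> real) \<Rightarrow> ('n \<Rightarrow> 'n \<Rightarrow> real)
    \<Rightarrow> ('n \<Rightarrow> 'n \<Rightarrow> real) \<Rightarrow> ('n \<Rightarrow> 'n \<Rightarrow> 'n \<Rightarrow> real) \<Rightarrow> ('n \<Rightarrow> 'n \<Rightarrow> 'n \<Rightarrow> real) \<Rightarrow> real" where
  "vscalar_form P1 P2 P3 X Z = (\<Sum>i\<in>UNIV. \<Sum>k\<in>UNIV. P1 i k * (\<Sum>h\<in>UNIV. \<Sum>j\<in>UNIV. P2 h j *
      (\<Sum>r\<in>UNIV. X i j r * (\<Sum>s\<in>UNIV. P3 r s * Z h k s) - X i k r * (\<Sum>s\<in>UNIV. P3 r s * Z h j s))))"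

definition scaled_on_indicatory ::
    "real^'n::finite \<Rightarrow> ('n \<Rightarrow> 'n \<Rightarrow> real) \<Rightarrow> real \<Rightarrow> ('n \<Rightarrow> 'n \<Rightarrow> real) \<Rightarrow> bool" where
  "scaled_on_indicatory y Q a P \<longleftrightarrow> (\<forall>M. indicatory2 y M \<longrightarrow>
     (\<Sum>i\<in>UNIV. \<Sum>k\<in>UNIV. Q i k * M i k) = a * (\<Sum>i\<in>UNIV. \<Sum>k\<in>UNIV. P i k * M i k))"

lemma vscalar_eq_vscalar_form:
  "vscalar G y = vscalar_form (\<lambda>i j. fund_inv G y $ i $ j) (\<lambda>i j. fund_inv G y $ i $ j)
      (\<lambda>i j. fund_inv G y $ i $ j) (\<lambda>i j k. cartan G i j k y) (\<lambda>i j k. cartan G i j k y)"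
  unfolding vscalar_def vricci_def vcurv_def cartan_mixed_def vscalar_form_def ..

lemma sum_mult_sum_swap: "(\<Sum>i\<in>I. y i * (\<Sum>h\<in>H. f i h)) = (\<Sum>h\<in>H. \<Sum>i\<in>I. y i * f i h)"
  for y :: "_ \<Rightarrow> real"
  by (simp add: sum_distrib_left sum.swap[of _ I H])

lemma sum_mult_cmult_left: "(\<Sum>i\<in>I. y i * (c * g i)) = c * (\<Sum>i\<in>I. y i * g i)"
  for y :: "_ \<Rightarrow> real"
  by (subst sum_distrib_left) (simp add: mult_ac)

lemma sum_mult_cmult_right: "(\<Sum>i\<in>I. y i * (g i * c)) = (\<Sum>i\<in>I. y i * g i) * c"
  for y :: "_ \<Rightarrow> real"
  by (subst sum_distrib_right) (simp add: mult_ac)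

lemma sum_mult_diff: "(\<Sum>i\<in>I. y i * (a i - b i)) = (\<Sum>i\<in>I. y i * a i) - (\<Sum>i\<in>I. y i * b i)"
  for y :: "_ \<Rightarrow> real"
  by (simp add: right_diff_distrib sum_subtractf)

lemma sum_mult_add: "(\<Sum>i\<in>I. y i * (a i + b i)) = (\<Sum>i\<in>I. y i * a i) + (\<Sum>i\<in>I. y i * b i)"
  for y :: "_ \<Rightarrow> real"
  by (simp add: distrib_left sum.distrib)

text \<open>Rewriting with these rules (instantiated at \<open>y\<close>) moves a contraction with \<open>y\<close>
  to the innermost position, where the indicatory hypotheses apply.\<close>

lemmas sum_contract_inside =
  sum_mult_sum_swap sum_mult_cmult_left sum_mult_cmult_right sum_mult_diff sum_mult_add

lemma indicatory3_if_totally_symmetric: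
  assumes "totally_symmetric X" and "\<And>i j. (\<Sum>k\<in>UNIV. y $ k * X i j k) = 0"
  shows "indicatory3 y X"
proof -
  have "X i j k = X j k i" "X j i k = X j k i" for i j k
    using assms(1) unfolding totally_symmetric_def by metis+
  then show ?thesis
    using assms(2) unfolding indicatory3_def by simp
qed

lemma indicatory3_lincomb:
  assumes "indicatory3 y X" "indicatory3 y Z"
  shows "indicatory3 y (\<lambda>i j k. a * X i j k + c * Z i j k)"
  using assms unfolding indicatory3_def
  by (simp add: distrib_left sum.distrib sum_distrib_left[symmetric] mult.left_commute)

lemma scaled_on_indicatory_if_decomposition:
  assumes "\<And>i k. Q i k = a * P i k + u i * y $ k + y $ i * v k"
  shows "scaled_on_indicatory y Q a P"
  unfolding scaled_on_indicatory_def
proof (intro allI impI)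
  fix M assume M: "indicatory2 y M"
  have "(\<Sum>i\<in>I. \<Sum>k\<in>K. Q i k * M i k)
      = a * (\<Sum>i\<in>I. \<Sum>k\<in>K. P i k * M i k) + (\<Sum>i\<in>I. u i * (\<Sum>k\<in>K. y $ k * M i k))
        + (\<Sum>k\<in>K. v k * (\<Sum>i\<in>I. y $ i * M i k))" for I K
    unfolding assms
    by (simp add: algebra_simps sum.distrib sum_distrib_left sum.swap[of _ K I])
  then show "(\<Sum>i\<in>UNIV. \<Sum>k\<in>UNIV. Q i k * M i k) = a * (\<Sum>i\<in>UNIV. \<Sum>k\<in>UNIV. P i k * M i k)"
    using M unfolding indicatory2_def by simp
qed

lemma sum_sum_mult_swap:
  fixes p q :: "_ \<Rightarrow> _ \<Rightarrow> real"
  shows "(\<Sum>i\<in>A. \<Sum>k\<in>B. p i k * (\<Sum>h\<in>C. \<Sum>j\<in>D. q h j * f i k h j))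
       = (\<Sum>h\<in>C. \<Sum>j\<in>D. q h j * (\<Sum>i\<in>A. \<Sum>k\<in>B. p i k * f i k h j))"
proof -
  have "(\<Sum>i\<in>A. \<Sum>k\<in>B. p i k * (\<Sum>h\<in>C. \<Sum>j\<in>D. q h j * f i k h j))
      = (\<Sum>i\<in>A. \<Sum>k\<in>B. \<Sum>h\<in>C. \<Sum>j\<in>D. q h j * (p i k * f i k h j))"
    by (simp add: sum_distrib_left mult.left_commute)
  also have "\<dots> = (\<Sum>h\<in>C. \<Sum>j\<in>D. \<Sum>i\<in>A. \<Sum>k\<in>B. q h j * (p i k * f i k h j))"
    by (simp only: sum.swap[of _ B C] sum.swap[of _ B D] sum.swap[of _ A C] sum.swap[of _ A D])
  finally show ?thesis
    by (simp add: sum_distrib_left)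
qed

lemma vscalar_form_swap12:
  "vscalar_form P1 P2 P3 X Z = (\<Sum>h\<in>UNIV. \<Sum>j\<in>UNIV. P2 h j * (\<Sum>i\<in>UNIV. \<Sum>k\<in>UNIV. P1 i k *
      (\<Sum>r\<in>UNIV. X i j r * (\<Sum>s\<in>UNIV. P3 r s * Z h k s) - X i k r * (\<Sum>s\<in>UNIV. P3 r s * Z h j s))))"
  unfolding vscalar_form_def by (rule sum_sum_mult_swap)

lemma vscalar_form_swap13:
  "vscalar_form P1 P2 P3 X Z = (\<Sum>r\<in>UNIV. \<Sum>s\<in>UNIV. P3 r s * (\<Sum>i\<in>UNIV. \<Sum>k\<in>UNIV. P1 i k *
      (\<Sum>h\<in>UNIV. \<Sum>j\<in>UNIV. P2 h j * (X i j r * Z h k s - X i k r * Z h j s))))"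
proof -
  have "(\<Sum>r\<in>R. X i j r * (\<Sum>s\<in>S. P3 r s * Z h k s) - X i k r * (\<Sum>s\<in>S. P3 r s * Z h j s))
      = (\<Sum>r\<in>R. \<Sum>s\<in>S. P3 r s * (X i j r * Z h k s - X i k r * Z h j s))" for R S i j h k
    by (simp add: sum_distrib_left sum_subtractf algebra_simps)
  then have "vscalar_form P1 P2 P3 X Z = (\<Sum>i\<in>UNIV. \<Sum>k\<in>UNIV. P1 i k * (\<Sum>h\<in>UNIV. \<Sum>j\<in>UNIV. P2 h j *
      (\<Sum>r\<in>UNIV. \<Sum>s\<in>UNIV. P3 r s * (X i j r * Z h k s - X i k r * Z h j s))))"
    unfolding vscalar_form_def by (simp only:)
  also have "\<dots> = (\<Sum>i\<in>UNIV. \<Sum>k\<in>UNIV. P1 i k * (\<Sum>r\<in>UNIV. \<Sum>s\<in>UNIV. P3 r s *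
      (\<Sum>h\<in>UNIV. \<Sum>j\<in>UNIV. P2 h j * (X i j r * Z h k s - X i k r * Z h j s))))"
    by (subst sum_sum_mult_swap) (rule refl)
  also have "\<dots> = (\<Sum>r\<in>UNIV. \<Sum>s\<in>UNIV. P3 r s * (\<Sum>i\<in>UNIV. \<Sum>k\<in>UNIV. P1 i k *
      (\<Sum>h\<in>UNIV. \<Sum>j\<in>UNIV. P2 h j * (X i j r * Z h k s - X i k r * Z h j s))))"
    by (rule sum_sum_mult_swap)
  finally show ?thesis .
qed

lemma vscalar_form_rescale:
  assumes Q: "scaled_on_indicatory y Q a P" and X: "indicatory3 y X" and Z: "indicatory3 y Z"
  shows "vscalar_form Q Q Q X Z = a^3 * vscalar_form P P P X Z"
proof -
  have "indicatory2 y (\<lambda>i k. (\<Sum>h\<in>UNIV. \<Sum>j\<in>UNIV. P2 h j *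
      (\<Sum>r\<in>UNIV. X i j r * (\<Sum>s\<in>UNIV. P3 r s * Z h k s) - X i k r * (\<Sum>s\<in>UNIV. P3 r s * Z h j s))))"
    "indicatory2 y (\<lambda>h j. (\<Sum>i\<in>UNIV. \<Sum>k\<in>UNIV. P1 i k *
      (\<Sum>r\<in>UNIV. X i j r * (\<Sum>s\<in>UNIV. P3 r s * Z h k s) - X i k r * (\<Sum>s\<in>UNIV. P3 r s * Z h j s))))"
    "indicatory2 y (\<lambda>r s. (\<Sum>i\<in>UNIV. \<Sum>k\<in>UNIV. P1 i k *
      (\<Sum>h\<in>UNIV. \<Sum>j\<in>UNIV. P2 h j * (X i j r * Z h k s - X i k r * Z h j s))))"
    for P1 P2 P3
    using X Z unfolding indicatory2_def indicatory3_def
    by (simp_all only: sum_contract_inside[where y="($) y"]) simp_all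
  note ind = this[THEN Q[unfolded scaled_on_indicatory_def, rule_format]]
  have "vscalar_form Q Q Q X Z = a * vscalar_form P Q Q X Z"
    using ind(1) unfolding vscalar_form_def .
  also have "vscalar_form P Q Q X Z = a * vscalar_form P P Q X Z"
    using ind(2) unfolding vscalar_form_swap12 .
  also have "vscalar_form P P Q X Z = a * vscalar_form P P P X Z"
    using ind(3) unfolding vscalar_form_swap13 .
  finally show ?thesis
    by (simp add: power3_eq_cube)
qed

definition trace2 :: "('n::finite \<Rightarrow> 'n \<Rightarrow> real) \<Rightarrow> ('n \<Rightarrow> 'n \<Rightarrow> 'n \<Rightarrow> real) \<Rightarrow> 'n \<Rightarrow> real" where
  "trace2 P X r = (\<Sum>i\<in>UNIV. \<Sum>j\<in>UNIV. P i j * X i j r)"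

definition cross_contraction ::
    "('n::finite \<Rightarrow> 'n \<Rightarrow> real) \<Rightarrow> ('n \<Rightarrow> 'n \<Rightarrow> 'n \<Rightarrow> real) \<Rightarrow> ('n \<Rightarrow> 'n \<Rightarrow> 'n \<Rightarrow> real) \<Rightarrow> real" where
  "cross_contraction P X Z = (\<Sum>i\<in>UNIV. \<Sum>k\<in>UNIV. P i k *
      (\<Sum>h\<in>UNIV. \<Sum>j\<in>UNIV. P h j * (\<Sum>r\<in>UNIV. X i j r * (\<Sum>s\<in>UNIV. P r s * Z h k s))))"

definition trace_contraction ::
    "('n::finite \<Rightarrow> 'n \<Rightarrow> real) \<Rightarrow> ('n \<Rightarrow> 'n \<Rightarrow> 'n \<Rightarrow> real) \<Rightarrow> ('n \<Rightarrow> 'n \<Rightarrow> 'n \<Rightarrow> real) \<Rightarrow> real" where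
  "trace_contraction P X Z = (\<Sum>i\<in>UNIV. \<Sum>k\<in>UNIV. P i k *
      (\<Sum>h\<in>UNIV. \<Sum>j\<in>UNIV. P h j * (\<Sum>r\<in>UNIV. X i k r * (\<Sum>s\<in>UNIV. P r s * Z h j s))))"

lemma trace2_annihilates:
  assumes "indicatory3 y X"
  shows "(\<Sum>r\<in>UNIV. y $ r * trace2 P X r) = 0"
  using assms unfolding trace2_def indicatory3_def
  by (simp only: sum_contract_inside[where y="($) y"]) simp

lemma vscalar_form_eq_cross_minus_trace:
  "vscalar_form P P P X Z = cross_contraction P X Z - trace_contraction P X Z"
  unfolding vscalar_form_def cross_contraction_def trace_contraction_def
  by (simp add: right_diff_distrib sum_subtractf)

lemma trace_contraction_eq:
  "trace_contraction P X Z = (\<Sum>r\<in>UNIV. trace2 P X r * (\<Sum>s\<in>UNIV. P r s * trace2 P Z s))"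
proof -
  have "(\<Sum>i\<in>I. \<Sum>k\<in>K. P i k * (\<Sum>h\<in>Hs. \<Sum>j\<in>J. P h j * (\<Sum>r\<in>R. X i k r * (\<Sum>s\<in>S. P r s * Z h j s))))
     = (\<Sum>r\<in>R. (\<Sum>i\<in>I. \<Sum>k\<in>K. P i k * X i k r) * (\<Sum>s\<in>S. P r s * (\<Sum>h\<in>Hs. \<Sum>j\<in>J. P h j * Z h j s)))"
    for I K Hs J R S
    \<comment> \<open>With distinct index sets the instances of \<open>sum.swap\<close> are oriented rewrite rules,
      and both sides are brought to the same fully expanded normal form.\<close>
    by (simp add: sum_distrib_left sum_distrib_right sum.swap[of _ K I] sum.swap[of _ Hs I]
        sum.swap[of _ J I] sum.swap[of _ R I] sum.swap[of _ S I] sum.swap[of _ Hs K] sum.swap[of _ J K]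
        sum.swap[of _ R K] sum.swap[of _ S K] sum.swap[of _ J Hs] sum.swap[of _ R Hs]
        sum.swap[of _ S Hs] sum.swap[of _ R J] sum.swap[of _ S J] sum.swap[of _ S R] mult_ac)
  then show ?thesis
    unfolding trace_contraction_def trace2_def .
qed

lemma cross_contraction_lincomb:
  "cross_contraction P X (\<lambda>h k s. a * Z1 h k s + b * Z2 h k s)
     = a * cross_contraction P X Z1 + b * cross_contraction P X Z2"
  "cross_contraction P (\<lambda>h k s. a * Z1 h k s + b * Z2 h k s) X
     = a * cross_contraction P Z1 X + b * cross_contraction P Z2 X"
  unfolding cross_contraction_def by (simp_all add: sum.distrib sum_distrib_left algebra_simps)

lemma cross_contraction_add:
  "cross_contraction P X (\<lambda>h k s. A h k s + B h k s) = cross_contraction P X A + cross_contraction P X B"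
  unfolding cross_contraction_def by (simp add: sum.distrib distrib_left)

lemma trace_contraction_lincomb:
  "trace_contraction P X (\<lambda>h k s. a * Z1 h k s + b * Z2 h k s)
     = a * trace_contraction P X Z1 + b * trace_contraction P X Z2"
  "trace_contraction P (\<lambda>h k s. a * Z1 h k s + b * Z2 h k s) X
     = a * trace_contraction P Z1 X + b * trace_contraction P Z2 X"
  unfolding trace_contraction_def by (simp_all add: sum.distrib sum_distrib_left algebra_simps)

lemma cross_contraction_commute:
  assumes P: "\<And>i j. P i j = P j i"
  shows "cross_contraction P X Z = cross_contraction P Z X"
proof -
  have "(\<Sum>i\<in>I. \<Sum>k\<in>K. P i k * (\<Sum>h\<in>Hs. \<Sum>j\<in>J. P h j * (\<Sum>r\<in>R. X i j r * (\<Sum>s\<in>S. P r s * Z h k s))))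
    = (\<Sum>h\<in>Hs. \<Sum>j\<in>J. P h j * (\<Sum>i\<in>I. \<Sum>k\<in>K. P i k * (\<Sum>s\<in>S. Z h k s * (\<Sum>r\<in>R. P r s * X i j r))))"
    for I K Hs J R S
    by (simp add: sum_distrib_left sum_distrib_right sum.swap[of _ K I] sum.swap[of _ Hs I]
        sum.swap[of _ J I] sum.swap[of _ R I] sum.swap[of _ S I] sum.swap[of _ Hs K] sum.swap[of _ J K]
        sum.swap[of _ R K] sum.swap[of _ S K] sum.swap[of _ J Hs] sum.swap[of _ R Hs]
        sum.swap[of _ S Hs] sum.swap[of _ R J] sum.swap[of _ S J] sum.swap[of _ S R] mult_ac)
  moreover have "(\<Sum>r\<in>UNIV. P r s * X i j r) = (\<Sum>r\<in>UNIV. P s r * X i j r)" for s i j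
    by (intro sum.cong refl arg_cong2[where f="(*)"] P)
  ultimately show ?thesis
    unfolding cross_contraction_def by simp
qed

lemma trace_contraction_commute:
  assumes P: "\<And>i j. P i j = P j i"
  shows "trace_contraction P X Z = trace_contraction P Z X"
proof -
  have "(\<Sum>r\<in>UNIV. trace2 P X r * (\<Sum>s\<in>UNIV. P r s * trace2 P Z s))
      = (\<Sum>r\<in>UNIV. \<Sum>s\<in>UNIV. trace2 P X r * P r s * trace2 P Z s)"
    by (simp add: sum_distrib_left mult.assoc)
  also have "\<dots> = (\<Sum>s\<in>UNIV. \<Sum>r\<in>UNIV. trace2 P X r * P r s * trace2 P Z s)"
    by (rule sum.swap)
  also have "\<dots> = (\<Sum>s\<in>UNIV. trace2 P Z s * (\<Sum>r\<in>UNIV. P s r * trace2 P X r))"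
  proof (intro sum.cong refl)
    fix s
    show "(\<Sum>r\<in>UNIV. trace2 P X r * P r s * trace2 P Z s)
        = trace2 P Z s * (\<Sum>r\<in>UNIV. P s r * trace2 P X r)"
      by (simp add: sum_distrib_left P[of _ s] mult_ac)
  qed
  finally show ?thesis
    unfolding trace_contraction_eq .
qed

lemma vscalar_form_quadratic:
  assumes P: "\<And>i j. P i j = P j i"
  shows "vscalar_form P P P (\<lambda>i j k. a * X i j k + b * Z i j k) (\<lambda>i j k. a * X i j k + b * Z i j k)
   = a\<^sup>2 * vscalar_form P P P X X + 2 * a * b * vscalar_form P P P X Z + b\<^sup>2 * vscalar_form P P P Z Z"
  unfolding vscalar_form_eq_cross_minus_trace cross_contraction_lincomb trace_contraction_lincomb
    cross_contraction_commute[OF P, where X=Z and Z=X]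
    trace_contraction_commute[OF P, where X=Z and Z=X]
  by (simp add: algebra_simps power2_eq_square)

section \<open>Jets of Finsler functions at a point\<close>

lemma matrix_inv_pos_def:
  fixes A :: "real^'n::finite^'n"
  assumes "\<And>v. v \<noteq> 0 \<Longrightarrow> v \<bullet> (A *v v) > 0"
  shows "matrix_inv A ** A = mat 1" "A ** matrix_inv A = mat 1"
proof -
  have "\<forall>x. A *v x = 0 \<longrightarrow> x = 0"
    using assms by (metis inner_zero_right less_irrefl)
  then obtain B where B: "B ** A = mat 1"
    using matrix_left_invertible_ker by blast
  then have "\<exists>A'. A ** A' = mat 1 \<and> A' ** A = mat 1"
    using matrix_left_right_inverse by blast
  then have "A ** matrix_inv A = mat 1 \<and> matrix_inv A ** A = mat 1"
    unfolding matrix_inv_def by (rule someI_ex)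
  then show "matrix_inv A ** A = mat 1" "A ** matrix_inv A = mat 1"
    by auto
qed

lemma transpose_inverse_eq:
  fixes A B :: "real^'n::finite^'n"
  assumes "A ** B = mat 1" "transpose A = A"
  shows "transpose B = B"
proof -
  have "transpose B ** A = mat 1"
    by (metis assms matrix_transpose_mul transpose_mat)
  then show ?thesis
    by (metis assms(1) matrix_mul_assoc matrix_mul_lid matrix_mul_rid)
qed

lemma sum_delta_diff_div:
  fixes f g :: "'n::finite \<Rightarrow> real"
  shows "(\<Sum>k\<in>UNIV. f k * (((if j = k then 1 else 0) - g k) / c)) = (f j - (\<Sum>k\<in>UNIV. f k * g k)) / c"
proof -
  have "(\<Sum>k\<in>UNIV. f k * (((if j = k then 1 else 0) - g k) / c))
      = (\<Sum>k\<in>UNIV. (if j = k then f k / c else 0) - f k * g k / c)"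
    by (rule sum.cong) (auto simp: diff_divide_distrib right_diff_distrib)
  then show ?thesis
    by (simp add: sum_subtractf sum_divide_distrib diff_divide_distrib)
qed

text \<open>With \<open>h = L H\<close> this is \<open>L\<^sup>-\<^sup>1 (h\<^sub>i\<^sub>j m\<^sub>k + h\<^sub>j\<^sub>k m\<^sub>i + h\<^sub>i\<^sub>k m\<^sub>j)\<close>, the correction
  term in the transformation law of the Cartan tensor (\<open>cartan_of_beta_change\<close>).\<close>

definition cyclic_hm :: "('n::finite \<Rightarrow> 'n \<Rightarrow> real) \<Rightarrow> real^'n \<Rightarrow> 'n \<Rightarrow> 'n \<Rightarrow> 'n \<Rightarrow> real" where
  "cyclic_hm H m i j k = H i j * m $ k + H j k * m $ i + H i k * m $ j"

text \<open>\<open>Fy\<close>, \<open>l\<close> and \<open>H\<close> stand for \<open>L(y)\<close>, \<open>\<partial>\<^sub>i L(y)\<close> and \<open>\<partial>\<^sub>i \<partial>\<^sub>j L(y)\<close>, so that the angular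
  metric is \<open>Fy H\<close>; the assumptions are the consequences of homogeneity and convexity that the
  algebra needs.\<close>

locale metric_jet =
  fixes y :: "real^'n::finite" and Fy :: real and l :: "real^'n" and H :: "'n \<Rightarrow> 'n \<Rightarrow> real"
  assumes Fy_pos: "Fy > 0"
    and H_sym: "H i j = H j i"
    and H_annihilates: "(\<Sum>j\<in>UNIV. H i j * y $ j) = 0"
    and l_inner: "l \<bullet> y = Fy"
    and pos_def: "v \<noteq> 0 \<Longrightarrow> v \<bullet> (fund_of Fy l H *v v) > 0"
begin

definition ginv :: "'n \<Rightarrow> 'n \<Rightarrow> real" where
  "ginv i j = matrix_inv (fund_of Fy l H) $ i $ j"

lemma ginv_sym: "ginv i j = ginv j i"
proof -
  have "transpose (fund_of Fy l H) = fund_of Fy l H"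
    by (simp add: transpose_def fund_of_def vec_eq_iff H_sym mult.commute)
  with matrix_inv_pos_def(2)[OF pos_def]
  have "transpose (matrix_inv (fund_of Fy l H)) = matrix_inv (fund_of Fy l H)"
    by (rule transpose_inverse_eq)
  then show ?thesis
    unfolding ginv_def by (metis transpose_def vec_lambda_beta)
qed

lemma fund_of_mult_y: "fund_of Fy l H *v y = Fy *\<^sub>R l"
proof -
  have "(fund_of Fy l H *v y) $ j = Fy * (\<Sum>k\<in>UNIV. H j k * y $ k) + l $ j * (l \<bullet> y)" for j
    by (simp add: fund_of_def matrix_vector_mult_def inner_vec_def distrib_right sum.distrib
        sum_distrib_left mult.assoc)
  then show ?thesis
    by (simp add: vec_eq_iff H_annihilates l_inner)
qed

lemma ginv_l: "(\<Sum>j\<in>UNIV. ginv i j * l $ j) = y $ i / Fy"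
proof -
  have "matrix_inv (fund_of Fy l H) *v (Fy *\<^sub>R l) = y"
    using matrix_inv_pos_def(1)[OF pos_def]
    by (simp flip: fund_of_mult_y add: matrix_vector_mul_assoc)
  then have "Fy * (\<Sum>j\<in>UNIV. ginv i j * l $ j) = y $ i"
    by (simp add: vec_eq_iff matrix_vector_mult_def ginv_def sum_distrib_left mult.left_commute)
  then show ?thesis
    using Fy_pos by (simp add: field_simps)
qed

lemma ginv_H: "(\<Sum>j\<in>UNIV. ginv i j * H j k) = ((if i = k then 1 else 0) - y $ i * l $ k / Fy) / Fy"
proof -
  have "(matrix_inv (fund_of Fy l H) ** fund_of Fy l H) $ i $ k
      = Fy * (\<Sum>j\<in>UNIV. ginv i j * H j k) + (\<Sum>j\<in>UNIV. ginv i j * l $ j) * l $ k"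
    by (simp add: matrix_matrix_mult_def fund_of_def ginv_def sum.distrib sum_distrib_left
        sum_distrib_right algebra_simps)
  moreover have "(matrix_inv (fund_of Fy l H) ** fund_of Fy l H) $ i $ k = (if i = k then 1 else 0)"
    using matrix_inv_pos_def(1)[OF pos_def] by (simp add: mat_def)
  ultimately have "Fy * (\<Sum>j\<in>UNIV. ginv i j * H j k) + y $ i / Fy * l $ k = (if i = k then 1 else 0)"
    by (simp add: ginv_l)
  then show ?thesis
    using Fy_pos by (simp add: field_simps)
qed

abbreviation ginv_vec :: "real^'n \<Rightarrow> real^'n" where
  "ginv_vec v \<equiv> matrix_inv (fund_of Fy l H) *v v"

lemma ginv_vec_nth: "ginv_vec v $ r = (\<Sum>s\<in>UNIV. ginv r s * v $ s)"
  by (simp add: matrix_vector_mult_def ginv_def)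

lemma ginv_vec_l: "ginv_vec l = (1 / Fy) *\<^sub>R y"
  by (simp add: vec_eq_iff ginv_vec_nth ginv_l)

definition ginv_H_ginv :: "'n \<Rightarrow> 'n \<Rightarrow> real" where
  "ginv_H_ginv i j = (\<Sum>k\<in>UNIV. \<Sum>h\<in>UNIV. ginv i k * ginv h j * H h k)"

lemma ginv_H_ginv_eq: "ginv_H_ginv i j = ginv i j / Fy - y $ i * y $ j / Fy ^ 3"
proof -
  have "ginv_H_ginv i j = (\<Sum>k\<in>UNIV. ginv i k * (\<Sum>h\<in>UNIV. ginv j h * H h k))"
    by (simp add: ginv_H_ginv_def sum_distrib_left mult.assoc ginv_sym[of _ j])
  also have "\<dots> = (ginv i j - (\<Sum>k\<in>UNIV. ginv i k * (y $ j * l $ k / Fy))) / Fy"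
    unfolding ginv_H by (rule sum_delta_diff_div)
  also have "(\<Sum>k\<in>UNIV. ginv i k * (y $ j * l $ k / Fy)) = y $ j / Fy * (\<Sum>k\<in>UNIV. ginv i k * l $ k)"
    by (simp add: sum_distrib_left mult_ac)
  finally show ?thesis
    unfolding ginv_l using Fy_pos by (simp add: power3_eq_cube field_simps)
qed

lemma contract_ginv_H_ginv:
  assumes "indicatory3 y X"
  shows "(\<Sum>i\<in>UNIV. \<Sum>j\<in>UNIV. ginv_H_ginv i j * (\<Sum>r\<in>UNIV. X i j r * w r))
    = (\<Sum>r\<in>UNIV. trace2 ginv X r * w r) / Fy"
proof -
  have "scaled_on_indicatory y ginv_H_ginv (1 / Fy) ginv"
    by (rule scaled_on_indicatory_if_decomposition[where u="\<lambda>_. 0" and v="\<lambda>j. - y $ j / Fy ^ 3"])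
      (simp add: ginv_H_ginv_eq)
  moreover have "indicatory2 y (\<lambda>i j. \<Sum>r\<in>UNIV. X i j r * w r)"
    using assms unfolding indicatory2_def indicatory3_def
    by (simp only: sum_contract_inside[where y="($) y"]) simp
  moreover have "(\<Sum>i\<in>I. \<Sum>j\<in>J. ginv i j * (\<Sum>r\<in>R. X i j r * w r))
      = (\<Sum>r\<in>R. (\<Sum>i\<in>I. \<Sum>j\<in>J. ginv i j * X i j r) * w r)" for I J R
    by (simp add: sum_distrib_left sum_distrib_right sum.swap[of _ R I] sum.swap[of _ R J] mult_ac)
  ultimately show ?thesis
    unfolding scaled_on_indicatory_def trace2_def by simp
qed

lemma trace_ginv_H: "(\<Sum>i\<in>UNIV. \<Sum>j\<in>UNIV. ginv i j * H i j) = (real CARD('n) - 1) / Fy"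
proof -
  have "(\<Sum>i\<in>UNIV. \<Sum>j\<in>UNIV. ginv i j * H i j) = (\<Sum>i\<in>UNIV. (1 - y $ i * l $ i / Fy) / Fy)"
  proof (intro sum.cong refl)
    fix i
    show "(\<Sum>j\<in>UNIV. ginv i j * H i j) = (1 - y $ i * l $ i / Fy) / Fy"
      using ginv_H[of i i] by (simp add: H_sym[of i])
  qed
  also have "\<dots> = (real CARD('n) - (l \<bullet> y) / Fy) / Fy"
    by (simp add: sum_subtractf sum_divide_distrib[symmetric] diff_divide_distrib inner_vec_def mult.commute)
  finally show ?thesis
    using Fy_pos by (simp add: l_inner)
qed

lemma contract_m_ginv_H:
  assumes "y \<bullet> m = 0"
  shows "(\<Sum>h\<in>UNIV. m $ h * (\<Sum>j\<in>UNIV. ginv h j * H j s)) = m $ s / Fy"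
proof -
  have "(\<Sum>h\<in>UNIV. m $ h * (\<Sum>j\<in>UNIV. ginv h j * H j s))
      = (m $ s - (\<Sum>h\<in>UNIV. m $ h * (y $ h * l $ s / Fy))) / Fy"
    unfolding ginv_H using sum_delta_diff_div[of "\<lambda>h. m $ h" s] by (simp add: eq_commute[of s])
  also have "(\<Sum>h\<in>UNIV. m $ h * (y $ h * l $ s / Fy)) = (\<Sum>h\<in>UNIV. y $ h * m $ h) * (l $ s / Fy)"
    by (subst sum_distrib_right) (simp add: mult_ac)
  also have "(\<Sum>h\<in>UNIV. y $ h * m $ h) = 0"
    using assms by (simp add: inner_vec_def)
  finally show ?thesis
    by simp
qed

lemma cyclic_hm_totally_symmetric: "totally_symmetric (cyclic_hm H m)"
  unfolding totally_symmetric_def cyclic_hm_def by (simp add: H_sym add_ac)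

lemma cyclic_hm_indicatory:
  assumes "y \<bullet> m = 0"
  shows "indicatory3 y (cyclic_hm H m)"
proof (rule indicatory3_if_totally_symmetric[OF cyclic_hm_totally_symmetric])
  have "(\<Sum>k\<in>UNIV. y $ k * H j k) = 0" for j
    using H_annihilates[of j] by (simp add: mult.commute)
  then show "(\<Sum>k\<in>UNIV. y $ k * cyclic_hm H m i j k) = 0" for i j
    using assms unfolding cyclic_hm_def inner_vec_def
    by (simp only: sum_contract_inside[where y="($) y"]) simp
qed

lemma trace2_cyclic_hm:
  assumes "y \<bullet> m = 0"
  shows "trace2 ginv (cyclic_hm H m) s = (real CARD('n) + 1) / Fy * m $ s"
proof -
  have "(\<Sum>h\<in>I. \<Sum>j\<in>J. ginv h j * cyclic_hm H m h j s)
      = m $ s * (\<Sum>h\<in>I. \<Sum>j\<in>J. ginv h j * H h j) + (\<Sum>h\<in>I. m $ h * (\<Sum>j\<in>J. ginv h j * H j s))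
        + (\<Sum>j\<in>J. m $ j * (\<Sum>h\<in>I. ginv h j * H h s))" for I J
    unfolding cyclic_hm_def
    by (simp add: sum.distrib sum_distrib_left distrib_left sum.swap[of _ J I] mult_ac)
  moreover have "(\<Sum>h\<in>UNIV. ginv h j * H h s) = (\<Sum>h\<in>UNIV. ginv j h * H h s)" for j
    by (intro sum.cong refl arg_cong2[where f="(*)"] ginv_sym)
  ultimately have "trace2 ginv (cyclic_hm H m) s
      = m $ s * (\<Sum>h\<in>UNIV. \<Sum>j\<in>UNIV. ginv h j * H h j) + 2 * (\<Sum>h\<in>UNIV. m $ h * (\<Sum>j\<in>UNIV. ginv h j * H j s))"
    unfolding trace2_def by simp
  also have "\<dots> = (real CARD('n) + 1) / Fy * m $ s"
    unfolding trace_ginv_H contract_m_ginv_H[OF assms] using Fy_pos by (simp add: field_simps)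
  finally show ?thesis .
qed

lemma cross_contraction_hm_parts:
  "cross_contraction ginv X (\<lambda>h k s. H h k * m $ s)
     = (\<Sum>i\<in>UNIV. \<Sum>j\<in>UNIV. ginv_H_ginv i j * (\<Sum>r\<in>UNIV. X i j r * ginv_vec m $ r))"
  "cross_contraction ginv X (\<lambda>h k s. H k s * m $ h)
     = (\<Sum>i\<in>UNIV. \<Sum>r\<in>UNIV. ginv_H_ginv i r * (\<Sum>j\<in>UNIV. X i j r * ginv_vec m $ j))"
  "cross_contraction ginv X (\<lambda>h k s. H h s * m $ k)
     = (\<Sum>r\<in>UNIV. \<Sum>j\<in>UNIV. ginv_H_ginv r j * (\<Sum>i\<in>UNIV. X i j r * ginv_vec m $ i))"
proof -
  have "(\<Sum>i\<in>I. \<Sum>k\<in>K. ginv i k * (\<Sum>h\<in>Hs. \<Sum>j\<in>J. ginv h j *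
          (\<Sum>r\<in>R. X i j r * (\<Sum>s\<in>S. ginv r s * (H h k * m $ s)))))
      = (\<Sum>i\<in>I. \<Sum>j\<in>J. (\<Sum>k\<in>K. \<Sum>h\<in>Hs. ginv i k * ginv h j * H h k) *
          (\<Sum>r\<in>R. X i j r * (\<Sum>s\<in>S. ginv r s * m $ s)))"
    "(\<Sum>i\<in>I. \<Sum>k\<in>K. ginv i k * (\<Sum>h\<in>Hs. \<Sum>j\<in>J. ginv h j *
          (\<Sum>r\<in>R. X i j r * (\<Sum>s\<in>S. ginv r s * (H k s * m $ h)))))
      = (\<Sum>i\<in>I. \<Sum>r\<in>R. (\<Sum>k\<in>K. \<Sum>s\<in>S. ginv i k * ginv r s * H k s) *
          (\<Sum>j\<in>J. X i j r * (\<Sum>h\<in>Hs. ginv h j * m $ h)))"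
    "(\<Sum>i\<in>I. \<Sum>k\<in>K. ginv i k * (\<Sum>h\<in>Hs. \<Sum>j\<in>J. ginv h j *
          (\<Sum>r\<in>R. X i j r * (\<Sum>s\<in>S. ginv r s * (H h s * m $ k)))))
      = (\<Sum>r\<in>R. \<Sum>j\<in>J. (\<Sum>s\<in>S. \<Sum>h\<in>Hs. ginv r s * ginv h j * H h s) *
          (\<Sum>i\<in>I. X i j r * (\<Sum>k\<in>K. ginv i k * m $ k)))"
    for I K Hs J R S
    by (simp_all add: sum_distrib_left sum_distrib_right sum.swap[of _ K I] sum.swap[of _ Hs I]
        sum.swap[of _ J I] sum.swap[of _ R I] sum.swap[of _ S I] sum.swap[of _ Hs K] sum.swap[of _ J K]
        sum.swap[of _ R K] sum.swap[of _ S K] sum.swap[of _ J Hs] sum.swap[of _ R Hs]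
        sum.swap[of _ S Hs] sum.swap[of _ R J] sum.swap[of _ S J] sum.swap[of _ S R] mult_ac)
  moreover have "(\<Sum>k\<in>UNIV. \<Sum>s\<in>UNIV. ginv i k * ginv r s * H k s) = ginv_H_ginv i r" for i r
    unfolding ginv_H_ginv_def
  proof (intro sum.cong refl)
    fix k s
    show "ginv i k * ginv r s * H k s = ginv i k * ginv s r * H s k"
      by (simp only: ginv_sym[of r s] H_sym[of k s])
  qed
  moreover have "(\<Sum>h\<in>UNIV. ginv h j * m $ h) = ginv_vec m $ j" for j
    unfolding ginv_vec_nth by (intro sum.cong refl) (simp add: ginv_sym[of _ j])
  ultimately show
    "cross_contraction ginv X (\<lambda>h k s. H h k * m $ s)
       = (\<Sum>i\<in>UNIV. \<Sum>j\<in>UNIV. ginv_H_ginv i j * (\<Sum>r\<in>UNIV. X i j r * ginv_vec m $ r))"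
    "cross_contraction ginv X (\<lambda>h k s. H k s * m $ h)
       = (\<Sum>i\<in>UNIV. \<Sum>r\<in>UNIV. ginv_H_ginv i r * (\<Sum>j\<in>UNIV. X i j r * ginv_vec m $ j))"
    "cross_contraction ginv X (\<lambda>h k s. H h s * m $ k)
       = (\<Sum>r\<in>UNIV. \<Sum>j\<in>UNIV. ginv_H_ginv r j * (\<Sum>i\<in>UNIV. X i j r * ginv_vec m $ i))"
    unfolding cross_contraction_def by (simp_all add: ginv_H_ginv_def[symmetric] ginv_vec_nth[symmetric])
qed

lemma cross_contraction_cyclic_hm:
  assumes X: "indicatory3 y X" "totally_symmetric X"
  shows "cross_contraction ginv X (cyclic_hm H m) = 3 / Fy * (\<Sum>r\<in>UNIV. trace2 ginv X r * ginv_vec m $ r)"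
proof -
  have X_sym: "X i j r = X i r j" "X i j r = X r j i" for i j r
    using X(2) unfolding totally_symmetric_def by metis+
  define w where "w r = ginv_vec m $ r" for r
  have "cyclic_hm H m = (\<lambda>h k s. (H h k * m $ s + H k s * m $ h) + H h s * m $ k)"
    by (simp add: fun_eq_iff cyclic_hm_def)
  then have "cross_contraction ginv X (cyclic_hm H m)
      = (\<Sum>i\<in>UNIV. \<Sum>j\<in>UNIV. ginv_H_ginv i j * (\<Sum>r\<in>UNIV. X i j r * w r))
      + (\<Sum>i\<in>UNIV. \<Sum>r\<in>UNIV. ginv_H_ginv i r * (\<Sum>j\<in>UNIV. X i j r * w j))
      + (\<Sum>r\<in>UNIV. \<Sum>j\<in>UNIV. ginv_H_ginv r j * (\<Sum>i\<in>UNIV. X i j r * w i))"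
    by (simp add: cross_contraction_add cross_contraction_hm_parts w_def)
  also have "(\<Sum>i\<in>UNIV. \<Sum>r\<in>UNIV. ginv_H_ginv i r * (\<Sum>j\<in>UNIV. X i j r * w j))
      = (\<Sum>i\<in>UNIV. \<Sum>j\<in>UNIV. ginv_H_ginv i j * (\<Sum>r\<in>UNIV. X i j r * w r))"
    by (intro sum.cong refl arg_cong2[where f="(*)"] X_sym(1))
  also have "(\<Sum>r\<in>UNIV. \<Sum>j\<in>UNIV. ginv_H_ginv r j * (\<Sum>i\<in>UNIV. X i j r * w i))
      = (\<Sum>i\<in>UNIV. \<Sum>j\<in>UNIV. ginv_H_ginv i j * (\<Sum>r\<in>UNIV. X i j r * w r))"
    by (intro sum.cong refl arg_cong2[where f="(*)"] X_sym(2))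
  finally show ?thesis
    unfolding contract_ginv_H_ginv[OF X(1)] w_def by simp
qed

lemma vscalar_form_cyclic_hm:
  assumes m: "y \<bullet> m = 0" and X: "indicatory3 y X" "totally_symmetric X"
  shows "vscalar_form ginv ginv ginv X (cyclic_hm H m)
    = (2 - real CARD('n)) / Fy * (\<Sum>r\<in>UNIV. trace2 ginv X r * ginv_vec m $ r)"
proof -
  have "trace_contraction ginv X (cyclic_hm H m)
      = (real CARD('n) + 1) / Fy * (\<Sum>r\<in>UNIV. trace2 ginv X r * ginv_vec m $ r)"
    unfolding trace_contraction_eq trace2_cyclic_hm[OF m] ginv_vec_nth
    by (simp add: sum_distrib_left mult_ac)
  then show ?thesis
    unfolding vscalar_form_eq_cross_minus_trace cross_contraction_cyclic_hm[OF X]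
    using Fy_pos by (simp add: field_simps)
qed

end

locale finsler_jet = metric_jet y Fy l H
  for y :: "real^'n::finite" and Fy l H +
  fixes T :: "'n \<Rightarrow> 'n \<Rightarrow> 'n \<Rightarrow> real"
  assumes T_sym: "T k i j = T k j i" "T k i j = T i k j"
    and T_annihilates: "(\<Sum>k\<in>UNIV. y $ k * T k i j) = - H i j"
begin

abbreviation C :: "'n \<Rightarrow> 'n \<Rightarrow> 'n \<Rightarrow> real" where
  "C \<equiv> cartan_of Fy l H T"

lemma cartan_totally_symmetric: "totally_symmetric C"
proof -
  have "T k i j = T j i k" for i j k
    using T_sym by metis
  then show ?thesis
    unfolding totally_symmetric_def cartan_of_def by (simp add: T_sym(1) H_sym algebra_simps)
qed

lemma cartan_indicatory: "indicatory3 y C"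
proof (rule indicatory3_if_totally_symmetric[OF cartan_totally_symmetric])
  fix i j
  have "(\<Sum>k\<in>UNIV. y $ k * H k j) = 0" for j
    using H_annihilates[of j] by (simp add: H_sym mult.commute)
  moreover have "(\<Sum>k\<in>UNIV. y $ k * C i j k)
      = (\<Sum>k\<in>UNIV. y $ k * (l $ k * H i j + Fy * T k i j + H k i * l $ j + l $ i * H k j)) / 2"
    unfolding cartan_of_def by (simp add: sum_divide_distrib)
  moreover have "(\<Sum>k\<in>UNIV. y $ k * (l $ k * H i j + Fy * T k i j + H k i * l $ j + l $ i * H k j))
      = (l \<bullet> y) * H i j + Fy * (\<Sum>k\<in>UNIV. y $ k * T k i j)
        + (\<Sum>k\<in>UNIV. y $ k * H k i) * l $ j + l $ i * (\<Sum>k\<in>UNIV. y $ k * H k j)"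
    by (simp add: inner_vec_def distrib_left sum.distrib sum_distrib_left sum_distrib_right mult_ac)
  ultimately show "(\<Sum>k\<in>UNIV. y $ k * C i j k) = 0"
    by (simp add: l_inner T_annihilates)
qed

lemma trace2_cartan: "(\<Sum>j\<in>UNIV. \<Sum>k\<in>UNIV. ginv j k * C r j k) = trace2 ginv C r"
  using cartan_totally_symmetric unfolding trace2_def totally_symmetric_def
  by (intro sum.cong refl arg_cong2[where f="(*)"]) metis

end

text \<open>Here \<open>e\<close> is \<open>exp (\<sigma> x)\<close> and \<open>star\<close> is the jet of \<open>*L = e L + \<beta>\<close> at \<open>y\<close>;
  \<open>Ls\<close>, \<open>tau\<close> and \<open>m\<close> are the \<open>*L(y)\<close>, \<open>\<tau>\<close> and \<open>m\<^sub>i\<close> of the paper.\<close>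

locale beta_change = finsler_jet y Fy l H T +
  star: metric_jet y "e * Fy + b \<bullet> y" "e *\<^sub>R l + b" "\<lambda>i j. e * H i j"
  for y :: "real^'n::finite" and Fy l H T and e :: real and b :: "real^'n" +
  assumes e_pos: "e > 0"
begin

definition Ls :: real where
  "Ls = e * Fy + b \<bullet> y"

definition tau :: real where
  "tau = e * Ls / Fy"

definition m :: "real^'n" where
  "m = b - (b \<bullet> y / Fy) *\<^sub>R l"

lemma Ls_pos: "Ls > 0"
  using star.Fy_pos by (simp add: Ls_def)

lemma tau_pos: "tau > 0"
  using e_pos Fy_pos Ls_pos by (simp add: tau_def)

lemma m_annihilates: "y \<bullet> m = 0"
  using l_inner Fy_pos by (simp add: m_def inner_diff_right inner_commute)

lemma cartan_of_beta_change:
  "cartan_of Ls (e *\<^sub>R l + b) (\<lambda>i j. e * H i j) (\<lambda>k i j. e * T k i j)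
     = (\<lambda>i j k. tau * C i j k + e / 2 * cyclic_hm H m i j k)"
  using Fy_pos by (simp add: fun_eq_iff cartan_of_def cyclic_hm_def tau_def Ls_def m_def H_sym field_simps)

lemma star_fund_mult_ginv:
  "(fund_of Ls (e *\<^sub>R l + b) (\<lambda>i j. e * H i j) ** matrix_inv (fund_of Fy l H)) $ j $ k
    = tau * (if j = k then 1 else 0) - tau * l $ j * y $ k / Fy + (e *\<^sub>R l + b) $ j * ginv_vec (e *\<^sub>R l + b) $ k"
proof -
  have "(fund_of Ls (e *\<^sub>R l + b) (\<lambda>i j. e * H i j) ** matrix_inv (fund_of Fy l H)) $ j $ k
      = Ls * e * (\<Sum>a\<in>UNIV. ginv k a * H a j) + (e *\<^sub>R l + b) $ j * (\<Sum>a\<in>UNIV. ginv k a * (e *\<^sub>R l + b) $ a)"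
    by (simp add: matrix_matrix_mult_def[of "fund_of _ _ _"] fund_of_nth ginv_def[symmetric]
        ginv_sym[of _ k] H_sym[of j] sum.distrib sum_distrib_left algebra_simps)
  also have "\<dots> = tau * (if j = k then 1 else 0) - tau * l $ j * y $ k / Fy
      + (e *\<^sub>R l + b) $ j * ginv_vec (e *\<^sub>R l + b) $ k"
    unfolding ginv_H ginv_vec_nth tau_def using Fy_pos by (auto simp: field_simps)
  finally show ?thesis .
qed

lemma star_ginv_eq:
  "tau * star.ginv i k
     = ginv i k + tau * y $ k / Fy * star.ginv_vec l $ i - ginv_vec (e *\<^sub>R l + b) $ k * (y $ i / Ls)"
proof -
  define gs where "gs = fund_of Ls (e *\<^sub>R l + b) (\<lambda>i j. e * H i j)"
  have "matrix_inv gs ** (gs ** matrix_inv (fund_of Fy l H)) = matrix_inv (fund_of Fy l H)"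
    unfolding gs_def Ls_def by (simp add: matrix_mul_assoc matrix_inv_pos_def(1)[OF star.pos_def])
  then have "ginv i k = (matrix_inv gs ** (gs ** matrix_inv (fund_of Fy l H))) $ i $ k"
    by (simp add: ginv_def)
  also have "\<dots> = (\<Sum>j\<in>UNIV. star.ginv i j * (gs ** matrix_inv (fund_of Fy l H)) $ j $ k)"
    unfolding matrix_matrix_mult_def[of "matrix_inv gs"] by (simp add: star.ginv_def gs_def Ls_def)
  also have "\<dots> = (\<Sum>j\<in>UNIV. tau * (if j = k then star.ginv i j else 0)
      - tau * y $ k / Fy * (star.ginv i j * l $ j)
      + ginv_vec (e *\<^sub>R l + b) $ k * (star.ginv i j * (e *\<^sub>R l + b) $ j))"
    unfolding gs_def star_fund_mult_ginv by (intro sum.cong refl) (simp add: algebra_simps)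
  also have "\<dots> = tau * star.ginv i k - tau * y $ k / Fy * star.ginv_vec l $ i
      + ginv_vec (e *\<^sub>R l + b) $ k * (y $ i / Ls)"
    using star.ginv_l[of i] unfolding star.ginv_vec_nth Ls_def
    by (simp add: sum.distrib sum_subtractf sum_distrib_left[symmetric] sum_divide_distrib[symmetric]
        del: vector_add_component)
  finally show ?thesis
    by linarith
qed

lemma scaled_on_indicatory_star_ginv: "scaled_on_indicatory y star.ginv (1 / tau) ginv"
proof (rule scaled_on_indicatory_if_decomposition)
  fix i k
  show "star.ginv i k = 1 / tau * ginv i k + star.ginv_vec l $ i / Fy * y $ k
      + y $ i * (- ginv_vec (e *\<^sub>R l + b) $ k / (Ls * tau))"
    using star_ginv_eq[of i k] tau_pos by (simp add: field_simps)
qed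

lemma trace2_cartan_ginv_vec_m: "(\<Sum>r\<in>UNIV. trace2 ginv C r * ginv_vec m $ r) = (\<Sum>r\<in>UNIV. trace2 ginv C r * ginv_vec b $ r)"
proof -
  have "ginv_vec m $ r = ginv_vec b $ r - b \<bullet> y / Fy / Fy * y $ r" for r
    by (simp add: m_def algebra_simps ginv_vec_l)
  then have "(\<Sum>r\<in>UNIV. trace2 ginv C r * ginv_vec m $ r)
      = (\<Sum>r\<in>UNIV. trace2 ginv C r * ginv_vec b $ r) - b \<bullet> y / Fy / Fy * (\<Sum>r\<in>UNIV. y $ r * trace2 ginv C r)"
    by (simp add: right_diff_distrib sum_subtractf sum_distrib_left mult_ac)
  then show ?thesis
    using trace2_annihilates[OF cartan_indicatory, of ginv] by simp
qed

lemma vscalar_form_beta_change: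
  defines "Cs \<equiv> cartan_of Ls (e *\<^sub>R l + b) (\<lambda>i j. e * H i j) (\<lambda>k i j. e * T k i j)"
  shows "vscalar_form star.ginv star.ginv star.ginv Cs Cs
    = 1 / tau * (vscalar_form ginv ginv ginv C C - (real CARD('n) - 2) / Ls *
        ((\<Sum>r\<in>UNIV. trace2 ginv C r * ginv_vec b $ r) + (real CARD('n) + 1) / (4 * Ls) * (m \<bullet> ginv_vec m)))"
proof -
  define n where "n = real CARD('n)"
  define S where "S = vscalar_form ginv ginv ginv C C"
  define X1 where "X1 = (\<Sum>r\<in>UNIV. trace2 ginv C r * ginv_vec b $ r)"
  define X2 where "X2 = m \<bullet> ginv_vec m"
  note K = cyclic_hm_indicatory[OF m_annihilates] cyclic_hm_totally_symmetric
  have Cs: "Cs = (\<lambda>i j k. tau * C i j k + e / 2 * cyclic_hm H m i j k)"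
    unfolding Cs_def by (rule cartan_of_beta_change)
  have CK: "vscalar_form ginv ginv ginv C (cyclic_hm H m) = (2 - n) / Fy * X1"
    unfolding vscalar_form_cyclic_hm[OF m_annihilates cartan_indicatory cartan_totally_symmetric]
      trace2_cartan_ginv_vec_m n_def X1_def ..
  have KK: "vscalar_form ginv ginv ginv (cyclic_hm H m) (cyclic_hm H m) = (2 - n) / Fy * ((n + 1) / Fy * X2)"
    unfolding vscalar_form_cyclic_hm[OF m_annihilates K] trace2_cyclic_hm[OF m_annihilates] n_def X2_def
    by (simp add: inner_vec_def sum_distrib_left mult_ac)
  have "indicatory3 y Cs"
    unfolding Cs by (rule indicatory3_lincomb[OF cartan_indicatory K(1)])
  then have "vscalar_form star.ginv star.ginv star.ginv Cs Cs
      = (1 / tau) ^ 3 * vscalar_form ginv ginv ginv Cs Cs"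
    by (intro vscalar_form_rescale[OF scaled_on_indicatory_star_ginv])
  also have "\<dots> = (1 / tau) ^ 3 * (tau\<^sup>2 * S + 2 * tau * (e / 2) * ((2 - n) / Fy * X1)
      + (e / 2)\<^sup>2 * ((2 - n) / Fy * ((n + 1) / Fy * X2)))"
    unfolding Cs vscalar_form_quadratic[OF ginv_sym] CK KK S_def ..
  also have "\<dots> = 1 / tau * (S - (n - 2) / Ls * (X1 + (n + 1) / (4 * Ls) * X2))"
    unfolding tau_def using e_pos Fy_pos Ls_pos by (simp add: field_simps power2_eq_square power3_eq_cube)
  finally show ?thesis
    unfolding n_def S_def X1_def X2_def .
qed

end

section \<open>The conformal \<beta>-change\<close>

lemma metric_jet_Finsler_fun:
  assumes F: "Finsler_fun F" and y: "y \<noteq> 0"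
  shows "metric_jet y (F y) (lvec F y) (hessian F y)"
proof
  show "F y > 0"
    using Finsler_fun_pos[OF F y] .
  show "hessian F y i j = hessian F y j i" for i j
    unfolding hessian_def using y by (intro smooth_on_pd_commute[OF Finsler_fun_smooth[OF F] open_nonzero]) simp
  show "(\<Sum>j\<in>UNIV. hessian F y i j * y $ j) = 0" for i
    using Finsler_hessian_annihilates[OF F y] .
  show "lvec F y \<bullet> y = F y"
    using Finsler_lvec_inner[OF F y] .
  show "v \<bullet> (fund_of (F y) (lvec F y) (hessian F y) *v v) > 0" if "v \<noteq> 0" for v
    using Finsler_fun_pos_def[OF F y that] fund_eq_fund_of[OF Finsler_fun_smooth[OF F] y] by simp
qed

lemma vscalar_eq_vscalar_form_jet:
  fixes G :: "real^'n::finite \<Rightarrow> real"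
  assumes G: "Finsler_fun G" and y: "y \<noteq> 0"
  defines "P \<equiv> metric_jet.ginv (G y) (lvec G y) (hessian G y)"
    and "X \<equiv> cartan_of (G y) (lvec G y) (hessian G y) (third_derivative G y)"
  shows "vscalar G y = vscalar_form P P P X X"
proof -
  interpret metric_jet y "G y" "lvec G y" "hessian G y"
    by (rule metric_jet_Finsler_fun[OF G y])
  show ?thesis
    unfolding vscalar_eq_vscalar_form fund_inv_def fund_eq_fund_of[OF Finsler_fun_smooth[OF G] y]
      cartan_eq_cartan_of[OF Finsler_fun_smooth[OF G] y] P_def X_def ginv_def[abs_def] ..
qed

lemma finsler_jet_Finsler_fun:
  assumes F: "Finsler_fun F" and y: "y \<noteq> 0"
  shows "finsler_jet y (F y) (lvec F y) (hessian F y) (third_derivative F y)"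
proof (rule finsler_jet.intro[OF metric_jet_Finsler_fun[OF F y]], unfold_locales)
  note sm = Finsler_fun_smooth[OF F]
  show "third_derivative F y k i j = third_derivative F y k j i" for k i j
    unfolding third_derivative_def using y smooth_on_pd_commute[OF sm open_nonzero]
    by (intro pd_cong_open[OF open_nonzero]) auto
  show "third_derivative F y k i j = third_derivative F y i k j" for k i j
    unfolding third_derivative_def using y
    by (intro smooth_on_pd_commute[OF smooth_on_pd[OF sm] open_nonzero]) simp
  show "(\<Sum>k\<in>UNIV. y $ k * third_derivative F y k i j) = - hessian F y i j" for i j
    using Finsler_third_derivative_annihilates[OF F y] .
qed

lemma vscalar_conformal_beta_change:
  fixes F :: "real^'n::finite \<Rightarrow> real"
  assumes F: "Finsler_fun F" and Fs: "Finsler_fun (\<lambda>v. e * F v + b \<bullet> v)" and e: "e > 0" and y: "y \<noteq> 0"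
  shows "vscalar (\<lambda>v. e * F v + b \<bullet> v) y
    = 1 / (e * (e * F y + b \<bullet> y) / F y) * (vscalar F y
        - (real CARD('n) - 2) / (e * F y + b \<bullet> y) * A_beta F (\<lambda>v. e * F v + b \<bullet> v) b y)"
proof -
  interpret beta_change y "F y" "lvec F y" "hessian F y" "third_derivative F y" e b
    using finsler_jet_Finsler_fun[OF F y] metric_jet_Finsler_fun[OF Fs y] e
    unfolding beta_change_def beta_change_axioms_def
    by (simp add: lvec_beta_change[OF F y] hessian_beta_change[OF F y])
  note smF = Finsler_fun_smooth[OF F]
  have "vscalar F y = vscalar_form ginv ginv ginv C C"
    by (rule vscalar_eq_vscalar_form_jet[OF F y])
  moreover have "vscalar (\<lambda>v. e * F v + b \<bullet> v) y = vscalar_form star.ginv star.ginv star.ginv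
      (cartan_of Ls (e *\<^sub>R lvec F y + b) (\<lambda>i j. e * hessian F y i j)
        (\<lambda>k i j. e * third_derivative F y k i j))
      (cartan_of Ls (e *\<^sub>R lvec F y + b) (\<lambda>i j. e * hessian F y i j)
        (\<lambda>k i j. e * third_derivative F y k i j))"
    using vscalar_eq_vscalar_form_jet[OF Fs y]
    by (simp add: Ls_def lvec_beta_change[OF F y] hessian_beta_change[OF F y]
        third_derivative_beta_change[OF F y])
  moreover have "c_beta F b y = (\<Sum>r\<in>UNIV. trace2 ginv C r * ginv_vec b $ r)"
    unfolding c_beta_def cartan_vec_def fund_inv_def fund_eq_fund_of[OF smF y]
      cartan_eq_cartan_of[OF smF y] ginv_def[symmetric] trace2_cartan ..
  moreover have "msq F b y = m \<bullet> ginv_vec m"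
    unfolding msq_def mvec_def m_def fund_inv_def fund_eq_fund_of[OF smF y] ..
  ultimately show ?thesis
    using vscalar_form_beta_change unfolding A_beta_def tau_def Ls_def by simp
qed

theorem lemma4:
  fixes U :: "(real^'n::finite) set"
    and L :: "real^'n \<Rightarrow> real^'n \<Rightarrow> real"
    and \<sigma> :: "real^'n \<Rightarrow> real"
    and b :: "real^'n \<Rightarrow> real^'n"
  assumes "open U"
    and "\<And>x. x \<in> U \<Longrightarrow> Finsler_fun (L x)"
    and "\<And>x. x \<in> U \<Longrightarrow> Finsler_fun (\<lambda>y. exp (\<sigma> x) * L x y + b x \<bullet> y)"
    and "x \<in> U" and "y \<noteq> 0"
  shows "let Ls = (\<lambda>v. exp (\<sigma> x) * L x v + b x \<bullet> v);
             \<tau> = exp (\<sigma> x) * Ls y / L x y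
         in vscalar Ls y
            = (1 / \<tau>) * (vscalar (L x) y
                 - (real CARD('n) - 2) / Ls y * A_beta (L x) Ls (b x) y)"
proof -
  have "Finsler_fun (L x)" and "Finsler_fun (\<lambda>y. exp (\<sigma> x) * L x y + b x \<bullet> y)"
    using assms(2-4) by blast+
  from vscalar_conformal_beta_change[OF this exp_gt_zero \<open>y \<noteq> 0\<close>] show ?thesis
    by (simp add: Let_def)
qed

end
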